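(* Let $A\in\mathbb{R}^{n\times n}$, $B\in\mathbb{R}^{n\times m}$ with $(A,B)$ controllable, and assume the subgraph $\mathcal G_{\sigma(t)}$ is undirected for all $t\ge0$. Given any $\alpha>0$ and $t^*>0$, let $K=\mu B^TW_{\mathrm c}^{-1}(\alpha,t^* )$ with $\mu\ge1/\lambda_H$, and let $\lambda_M,\lambda_m$ be the largest and smallest eigenvalues of $W_{\mathrm c}(0,t^* )$. Then $$\|\Phi_j(t)\|\le C_0(t^* )\,e^{-\alpha t}\quad\text{for all }t\in[0,\tau_j]\text{ and all }j=0,1,2,\dots,$$ where $C_0(t^* )=\sqrt{\lambda_M/\lambda_m}\;e^{\alpha t^*/2}\ge1$.
   Context: $\sigma:[0,\infty)\to\mathcal P=\{1,\dots,n_0\}$ is a piecewise constant switching signal with switching instants $0=t_0<t_1<\cdots$, $t_{j+1}-t_j\ge\tau>0$, $\sigma$ constant on $[t_j,t_{j+1})$; $\tau_j:=t_{j+1}-t_j$. For each $p$, $\bar{\mathcal G}_p$ is a graph on nodes $\{0,\dots,N\}$ with edges $(j,i)$, $j\ne i$; $a_{ij}(t)=1$ if $(j,i)$ is an edge of $\bar{\mathcal G}_{\sigma(t)}$, else $0$. $\mathcal G_{\sigma(t)}$ is the subgraph on $\{1,\dots,N\}$ (undirected: $(i,j)$ edge iff $(j,i)$ edge), with Laplacian $\mathcal L_{\sigma(t)}$ ($l_{ii}=\sum_{j=1}^Na_{ij}(t)$, $l_{ij}=-a_{ij}(t)$). $\mathcal H_{\sigma(t)}=\mathcal L_{\sigma(t)}+\mathrm{diag}(a_{10}(t),\dots,a_{N0}(t))$,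 which is symmetric positive semidefinite when $\mathcal G_{\sigma(t)}$ is undirected. $\lambda_H=\frac{4}{N(N^2-N+4)}$. For each $j$, let $n_j$ be the nullity of $\mathcal H_{\sigma(t_j)}$, let its eigenvalues be $0=\lambda_1^{(j)}=\dots=\lambda_{n_j}^{(j)}<\lambda_{n_j+1}^{(j)}\le\dots\le\lambda_N^{(j)}$ with corresponding orthonormal eigenvectors $\xi_1^{(j)},\dots,\xi_N^{(j)}$, and set $\Gamma_{\sigma(t_j)}=[\xi_{n_j+1}^{(j)}\ \cdots\ \xi_N^{(j)}]\in\mathbb{R}^{N\times(N-n_j)}$, $\bar\Gamma_{\sigma(t_j)}=\Gamma_{\sigma(t_j)}\otimes I_n$, $M_j=\mathrm{diag}\{A-\lambda_{n_j+1}^{(j)}BK,\dots,A-\lambda_N^{(j)}BK\}$ (block diagonal), and $\Phi_j(t)=\bar\Gamma_{\sigma(t_j)}e^{M_jt}\bar\Gamma_{\sigma(t_j)}^T\in\mathbb{R}^{Nn\times Nn}$. The weighted controllability Gramian is $W_{\mathrm c}(\alpha,t^* )=\int_0^{t^*}e^{-\alpha t}e^{-\frac{A}{2}t}BB^Te^{-\frac{A^T}{2}t}\,dt$ (positive definite under controllability). $\|\cdot\|$ is the matrix norm induced by the Euclidean norm. *)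

theory Defs
  imports "HOL-Analysis.Analysis"
begin

primrec mpow :: "real^'n^'n \<Rightarrow> nat \<Rightarrow> real^'n^'n" where
  "mpow M 0 = mat 1"
| "mpow M (Suc k) = M ** mpow M k"

definition mexp :: "real^'n^'n \<Rightarrow> real^'n^'n" where
  "mexp M = (\<Sum>k. (1 / fact k) *\<^sub>R mpow M k)"

text \<open>Controllability of (A,B): the Kalman matrix [B, AB, ..., A^(n-1) B] has full rank n,
  i.e. its column space is all of R^n.\<close>
definition controllable :: "real^'n^'n \<Rightarrow> real^'m^'n \<Rightarrow> bool" where
  "controllable A B \<longleftrightarrow>
     span {(mpow A k ** B) *v v | k v. k < CARD('n)} = UNIV"

definition is_eigenvalue :: "real^'n^'n \<Rightarrow> real \<Rightarrow> bool" where
  "is_eigenvalue W l \<longleftrightarrow> (\<exists>v. v \<noteq> 0 \<and> W *v v = l *\<^sub>R v)"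

definition gramian :: "real^'n^'n \<Rightarrow> real^'m^'n \<Rightarrow> real \<Rightarrow> real \<Rightarrow> real^'n^'n" where
  "gramian A B \<alpha> ts = integral {0..ts}
     (\<lambda>t. exp (- \<alpha> * t) *\<^sub>R
          (mexp ((- t / 2) *\<^sub>R A) ** B ** transpose B ** mexp ((- t / 2) *\<^sub>R transpose A)))"

text \<open>Graphs: for mode p, adj p i j means (j,i) is an edge among followers (a_ij = 1),
  pin p i means (0,i) is an edge from the leader (a_i0 = 1).\<close>
definition aij :: "(nat \<Rightarrow> 'N \<Rightarrow> 'N \<Rightarrow> bool) \<Rightarrow> nat \<Rightarrow> 'N \<Rightarrow> 'N \<Rightarrow> real" where
  "aij adj p i j = (if adj p i j then 1 else 0)"

definition laplacian :: "(nat \<Rightarrow> 'N::finite \<Rightarrow> 'N \<Rightarrow> bool) \<Rightarrow> nat \<Rightarrow> real^'N^'N" where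
  "laplacian adj p = (\<chi> i j. if i = j then (\<Sum>k\<in>UNIV. aij adj p i k) else - aij adj p i j)"

definition Hmat :: "(nat \<Rightarrow> 'N::finite \<Rightarrow> 'N \<Rightarrow> bool) \<Rightarrow> (nat \<Rightarrow> 'N \<Rightarrow> bool) \<Rightarrow> nat \<Rightarrow> real^'N^'N" where
  "Hmat adj pin p = laplacian adj p + (\<chi> i j. if i = j then (if pin p i then 1 else 0) else 0)"

definition lambda_H :: "nat \<Rightarrow> real" where
  "lambda_H N = 4 / (real N * (real N ^ 2 - real N + 4))"

text \<open>Phi_j(t) = Gamma_bar e^(M_j t) Gamma_bar^T, with Gamma_bar = Gamma (x) I_n and
  M_j block diagonal with blocks A - lambda_k B K (k = n_j+1..N); written out blockwise
  (block (i,i') equals sum_k xi_k(i) xi_k(i') e^((A - lambda_k B K) t)).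
  Eigen-indices are 0-based here: k ranges over {nj..<N}.\<close>
definition Phi :: "real^'n^'n \<Rightarrow> real^'m^'n \<Rightarrow> real^'n^'m \<Rightarrow> nat \<Rightarrow> (nat \<Rightarrow> real)
    \<Rightarrow> (nat \<Rightarrow> real^'N) \<Rightarrow> real \<Rightarrow> real^('N::finite \<times> 'n)^('N \<times> 'n)" where
  "Phi A B K nj lam xi t = (\<chi> r c.
     \<Sum>k\<in>{nj..<CARD('N)}. xi k $ fst r * xi k $ fst c *
        mexp (t *\<^sub>R (A - lam k *\<^sub>R (B ** K))) $ snd r $ snd c)"

end

theory Submission
  imports Defs "HOL-Library.Transitive_Closure_Table"
begin

(*
  The gain makes the Gramian W = W_c(alpha, tstar) a Lyapunov matrix for every block: integrating the
  Gramian integrand gives (A W z).z <= |B^T z|^2 - alpha (W z).z, and the feedback term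
  lambda_k mu B B^T W^-1 contributes -lambda_k mu |B^T z|^2, so lambda_k mu >= 1 yields
  ((A - lambda_k B K) W z).z <= -alpha (W z).z.  Hence V(x) = x.W^-1 x decays like exp(-2 alpha t)
  along x' = (A - lambda_k B K) x, and exp(-alpha tstar) lambda_m <= W <= lambda_M turns this into
  |exp((A - lambda_k B K) t)| <= C0 exp(-alpha t).

  The condition lambda_k mu >= 1 holds since every positive eigenvalue of the grounded Laplacian H
  is at least lambda_H: walk from the largest entry of an eigenvector either to a pinned node, or,
  in a component without pinned nodes (whose indicator lies in the kernel of H), to an entry of
  opposite sign, and compare the squared differences along the path with the energy v.Hv.

  Finally Phi_j acts blockwise in the orthonormal eigenbasis, so its norm is at most the largest
  block norm.
*)

section \<open>Matrix exponential\<close>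

text \<open>Matrices carry no Banach algebra structure in the library, so \<open>mexp\<close> is related to \<open>exp\<close> in
  the algebra of bounded linear endomorphisms.\<close>

typedef (overloaded) 'a endo = "UNIV :: ('a::euclidean_space \<Rightarrow>\<^sub>L 'a) set"
  morphisms Rep_endo Abs_endo by simp

setup_lifting type_definition_endo

lemma id_blinfun_neq_zero: "(id_blinfun :: 'a::euclidean_space \<Rightarrow>\<^sub>L 'a) \<noteq> 0"
proof
  assume "(id_blinfun :: 'a \<Rightarrow>\<^sub>L 'a) = 0"
  hence "blinfun_apply (id_blinfun :: 'a \<Rightarrow>\<^sub>L 'a) (SOME b. b \<in> Basis) = 0" by simp
  moreover have "(SOME b. b \<in> (Basis::'a set)) \<noteq> 0"
    by (metis nonempty_Basis someI_ex all_not_in_conv zero_not_in_Basis)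
  ultimately show False by simp
qed

instantiation endo :: (euclidean_space) real_normed_algebra_1
begin
lift_definition norm_endo :: "'a endo \<Rightarrow> real" is norm .
lift_definition minus_endo :: "'a endo \<Rightarrow> 'a endo \<Rightarrow> 'a endo" is "(-)" .
lift_definition plus_endo :: "'a endo \<Rightarrow> 'a endo \<Rightarrow> 'a endo" is "(+)" .
lift_definition uminus_endo :: "'a endo \<Rightarrow> 'a endo" is "uminus" .
lift_definition zero_endo :: "'a endo" is "0" .
lift_definition one_endo :: "'a endo" is "id_blinfun" .
lift_definition times_endo :: "'a endo \<Rightarrow> 'a endo \<Rightarrow> 'a endo" is "(o\<^sub>L)" .
lift_definition scaleR_endo :: "real \<Rightarrow> 'a endo \<Rightarrow> 'a endo" is "scaleR" .
definition dist_endo :: "'a endo \<Rightarrow> 'a endo \<Rightarrow> real" where "dist_endo a b = norm (a - b)"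
definition uniformity_endo :: "('a endo \<times> 'a endo) filter" where
  "uniformity_endo = (INF e\<in>{0 <..}. principal {(x, y). dist x y < e})"
definition open_endo :: "'a endo set \<Rightarrow> bool" where
  "open_endo S = (\<forall>x\<in>S. \<forall>\<^sub>F (x', y) in uniformity. x' = x \<longrightarrow> y \<in> S)"
definition sgn_endo :: "'a endo \<Rightarrow> 'a endo" where "sgn_endo x = scaleR (inverse (norm x)) x"

instance
  apply standard
  unfolding dist_endo_def open_endo_def sgn_endo_def uniformity_endo_def
  apply (rule refl | (transfer; auto simp: algebra_simps blinfun.bilinear_simps norm_blinfun_compose
     norm_triangle_ineq id_blinfun_neq_zero intro!: blinfun_eqI))+
  done
end

lemma norm_endo_eq: "norm X = norm (Rep_endo X)"
  by transfer simp

lemma Rep_endo_diff: "Rep_endo (X - Y) = Rep_endo X - Rep_endo Y"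
  by transfer simp

instance endo :: (euclidean_space) banach
proof
  fix X :: "nat \<Rightarrow> 'a endo"
  assume "Cauchy X"
  hence "Cauchy (\<lambda>n. Rep_endo (X n))"
    unfolding Cauchy_def dist_norm by (simp add: norm_endo_eq Rep_endo_diff[symmetric])
  then obtain L where L: "(\<lambda>n. Rep_endo (X n)) \<longlonglongrightarrow> L"
    using convergent_def Cauchy_convergent_iff by blast
  have "X \<longlonglongrightarrow> Abs_endo L"
    using L unfolding tendsto_iff dist_norm
    by (simp add: norm_endo_eq Rep_endo_diff Abs_endo_inverse)
  thus "convergent X" unfolding convergent_def by blast
qed

definition endo_of :: "real^'n^'n \<Rightarrow> (real^'n) endo" where
  "endo_of M = Abs_endo (Blinfun (\<lambda>x. M *v x))"

definition matrix_of_endo :: "(real^'n) endo \<Rightarrow> real^'n^'n" where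
  "matrix_of_endo X = matrix (blinfun_apply (Rep_endo X))"

definition endo_apply :: "(real^'n) endo \<Rightarrow> real^'n \<Rightarrow> real^'n" where
  "endo_apply X x = blinfun_apply (Rep_endo X) x"

lemma endo_apply_endo_of [simp]: "endo_apply (endo_of M) x = M *v x"
  by (simp add: endo_apply_def endo_of_def Abs_endo_inverse bounded_linear_Blinfun_apply)

lemma matrix_of_endo_of [simp]: "matrix_of_endo (endo_of M) = M"
  by (simp add: matrix_of_endo_def endo_of_def Abs_endo_inverse bounded_linear_Blinfun_apply)

lemma matrix_of_endo_mult_vector: "matrix_of_endo X *v x = endo_apply X x"
  unfolding matrix_of_endo_def endo_apply_def
  by (simp add: matrix_works blinfun.bounded_linear_right bounded_linear.linear)

lemma endo_eqI: "(\<And>x. endo_apply X x = endo_apply Y x) \<Longrightarrow> X = Y"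
  unfolding endo_apply_def by (metis Rep_endo_inject blinfun_eqI)

lemma endo_apply_mult [simp]: "endo_apply (X * Y) x = endo_apply X (endo_apply Y x)"
  unfolding endo_apply_def by transfer simp

lemma endo_apply_one [simp]: "endo_apply 1 x = x"
  unfolding endo_apply_def by transfer simp

lemma endo_apply_zero [simp]: "endo_apply 0 x = 0"
  unfolding endo_apply_def by transfer simp

lemma endo_apply_add [simp]: "endo_apply (X + Y) x = endo_apply X x + endo_apply Y x"
  unfolding endo_apply_def by transfer (simp add: blinfun.bilinear_simps)

lemma endo_apply_scaleR [simp]: "endo_apply (c *\<^sub>R X) x = c *\<^sub>R endo_apply X x"
  unfolding endo_apply_def by transfer (simp add: blinfun.bilinear_simps)

lemma norm_endo_apply_le: "norm (endo_apply X x) \<le> norm X * norm x"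
  unfolding endo_apply_def by transfer (rule norm_blinfun)

lemma endo_of_mult: "endo_of (M ** N) = endo_of M * endo_of N"
  by (rule endo_eqI) (simp add: matrix_vector_mul_assoc)

lemma endo_of_one: "endo_of (mat 1) = 1"
  by (rule endo_eqI) simp

lemma endo_of_scaleR: "endo_of (c *\<^sub>R M) = c *\<^sub>R endo_of M"
  by (rule endo_eqI) (simp add: scaleR_matrix_vector_assoc)

lemma endo_of_mpow: "endo_of (mpow M k) = endo_of M ^ k"
  by (induction k) (simp_all add: endo_of_one endo_of_mult)

lemma endo_of_inject: "endo_of M = endo_of N \<Longrightarrow> M = N"
  by (metis matrix_of_endo_of)

lemma matrix_of_endo_mult: "matrix_of_endo (X * Y) = matrix_of_endo X ** matrix_of_endo Y"
  by (rule endo_of_inject, rule endo_eqI) (simp add: matrix_of_endo_mult_vector matrix_vector_mul_assoc[symmetric])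

lemma matrix_of_endo_add: "matrix_of_endo (X + Y) = matrix_of_endo X + matrix_of_endo Y"
  by (rule endo_of_inject, rule endo_eqI)
    (simp add: matrix_of_endo_mult_vector matrix_vector_mult_add_rdistrib)

lemma matrix_of_endo_scaleR: "matrix_of_endo (c *\<^sub>R X) = c *\<^sub>R matrix_of_endo X"
  by (rule endo_of_inject, rule endo_eqI)
    (simp add: matrix_of_endo_mult_vector scaleR_matrix_vector_assoc[symmetric])

lemma norm_matrix_of_endo_le:
  "norm (matrix_of_endo X) \<le> real CARD('n) * real CARD('n) * norm (X :: (real^'n) endo)"
proof -
  have entry: "\<bar>matrix_of_endo X $ i $ j\<bar> \<le> norm X" for i j
  proof -
    have "\<bar>matrix_of_endo X $ i $ j\<bar> \<le> norm (endo_apply X (axis j 1))"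
      unfolding matrix_of_endo_def endo_apply_def matrix_def by (simp add: component_le_norm_cart)
    also have "\<dots> \<le> norm X * norm (axis j (1::real))" by (rule norm_endo_apply_le)
    finally show ?thesis by simp
  qed
  have "norm (matrix_of_endo X) \<le> (\<Sum>i\<in>UNIV. norm (matrix_of_endo X $ i))"
    by (simp add: norm_vec_def L2_set_le_sum)
  also have "\<dots> \<le> (\<Sum>i\<in>(UNIV::'n set). \<Sum>j\<in>(UNIV::'n set). norm X)"
    by (rule sum_mono, rule order_trans[OF norm_le_l1_cart], rule sum_mono, rule entry)
  finally show ?thesis by (simp add: algebra_simps)
qed

lemma bounded_linear_matrix_of_endo: "bounded_linear (matrix_of_endo :: (real^'n) endo \<Rightarrow> _)"
proof
  show "\<exists>K. \<forall>X::(real^'n) endo. norm (matrix_of_endo X) \<le> norm X * K"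
    using norm_matrix_of_endo_le by (metis mult.commute)
qed (simp_all add: matrix_of_endo_add matrix_of_endo_scaleR)

lemma bounded_linear_endo_apply: "bounded_linear (\<lambda>X. endo_apply X x)"
proof
  show "\<exists>K. \<forall>X. norm (endo_apply X x) \<le> norm X * K" using norm_endo_apply_le by blast
qed (simp_all add: endo_apply_def plus_endo.rep_eq scaleR_endo.rep_eq blinfun.bilinear_simps)

lemma mexp_eq_exp_endo: "mexp M = matrix_of_endo (exp (endo_of M))"
proof -
  have "matrix_of_endo (exp (endo_of M)) = (\<Sum>n. matrix_of_endo (endo_of M ^ n /\<^sub>R fact n))"
    unfolding exp_def
    by (rule bounded_linear.suminf[OF bounded_linear_matrix_of_endo summable_exp_generic])
  also have "\<dots> = (\<Sum>n. (1 / fact n) *\<^sub>R mpow M n)"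
    by (simp add: matrix_of_endo_scaleR endo_of_mpow[symmetric] divide_inverse)
  finally show ?thesis by (simp add: mexp_def)
qed

lemma summable_mexp: "summable (\<lambda>k. (1 / fact k) *\<^sub>R mpow (M::real^'n^'n) k)"
proof -
  have "summable (\<lambda>n. matrix_of_endo (endo_of M ^ n /\<^sub>R fact n))"
    by (rule bounded_linear.summable[OF bounded_linear_matrix_of_endo summable_exp_generic])
  thus ?thesis by (simp add: matrix_of_endo_scaleR endo_of_mpow[symmetric] divide_inverse)
qed

lemma mexp_zero [simp]: "mexp (0::real^'n^'n) = mat 1"
proof -
  have "endo_of (0::real^'n^'n) = 0" by (rule endo_eqI) simp
  thus ?thesis by (simp add: mexp_eq_exp_endo flip: endo_of_one)
qed

lemma mpow_Suc_right: "mpow M (Suc k) = mpow M k ** M"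
  by (induction k) (simp_all add: matrix_mul_assoc)

lemma transpose_mpow: "transpose (mpow M k) = mpow (transpose M) k"
proof (induction k)
  case (Suc k)
  have "transpose (mpow M (Suc k)) = transpose (mpow M k) ** transpose M"
    by (simp add: matrix_transpose_mul)
  also have "\<dots> = mpow (transpose M) (Suc k)" by (simp only: Suc mpow_Suc_right)
  finally show ?case .
qed simp

lemma bounded_linear_transpose: "bounded_linear (transpose :: real^'n^'m \<Rightarrow> real^'m^'n)"
  unfolding linear_conv_bounded_linear[symmetric]
  by (rule linearI) (simp_all add: transpose_def vec_eq_iff)

lemma transpose_mexp: "transpose (mexp M) = mexp (transpose (M::real^'n^'n))"
  unfolding mexp_def
  by (simp add: bounded_linear.suminf[OF bounded_linear_transpose summable_mexp]
      transpose_scalar transpose_mpow)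

lemma mexp_scaleR_mult_vector: "mexp (t *\<^sub>R M) *v x = endo_apply (exp (t *\<^sub>R endo_of M)) x"
  by (simp add: mexp_eq_exp_endo matrix_of_endo_mult_vector endo_of_scaleR)

lemma has_vector_derivative_mexp_left:
  "((\<lambda>t. mexp (t *\<^sub>R M) *v x) has_vector_derivative (M *v (mexp (t *\<^sub>R M) *v x))) (at t within S)"
  unfolding mexp_scaleR_mult_vector
  using bounded_linear.has_vector_derivative[OF bounded_linear_endo_apply
      exp_scaleR_has_vector_derivative_left[where A="endo_of M" and t=t]]
  by (simp add: has_vector_derivative_at_within)

lemma has_vector_derivative_mexp_right:
  "((\<lambda>t. mexp (t *\<^sub>R M) *v x) has_vector_derivative (mexp (t *\<^sub>R M) *v (M *v x))) (at t within S)"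
  unfolding mexp_scaleR_mult_vector
  using bounded_linear.has_vector_derivative[OF bounded_linear_endo_apply
      exp_scaleR_has_vector_derivative_right[where A="endo_of M" and t=t and T=S]]
  by simp

lemma continuous_on_mexp_scaleR:
  assumes "continuous_on S f"
  shows "continuous_on S (\<lambda>t. mexp (f t *\<^sub>R (M::real^'n^'n)))"
proof -
  have "continuous_on (f ` S) (\<lambda>s. exp (s *\<^sub>R endo_of M))"
    by (rule continuous_on_vector_derivative, rule exp_scaleR_has_vector_derivative_right)
  from continuous_on_compose[OF assms this]
  have "continuous_on S (\<lambda>t. matrix_of_endo (exp (f t *\<^sub>R endo_of M)))"
    unfolding o_def by (rule bounded_linear.continuous_on[OF bounded_linear_matrix_of_endo])
  thus ?thesis by (simp add: mexp_eq_exp_endo endo_of_scaleR)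
qed

lemma continuous_on_mexp_sandwich:
  fixes M C N :: "real^'n^'n"
  assumes "continuous_on S f"
  shows "continuous_on S (\<lambda>t. mexp (f t *\<^sub>R M) ** C ** mexp (f t *\<^sub>R N))"
proof -
  have "mexp (f t *\<^sub>R M) ** C ** mexp (f t *\<^sub>R N) =
      matrix_of_endo (exp (f t *\<^sub>R endo_of M) * endo_of C * exp (f t *\<^sub>R endo_of N))" for t
    by (simp add: matrix_of_endo_mult mexp_eq_exp_endo endo_of_scaleR)
  moreover have "continuous_on S (\<lambda>t. exp (f t *\<^sub>R X))" for X :: "(real^'n) endo"
    using continuous_on_compose[OF assms continuous_on_vector_derivative,
        OF exp_scaleR_has_vector_derivative_right] by (simp add: o_def)
  ultimately show ?thesis
    by (simp only:) (intro continuous_intros bounded_linear.continuous_on[OF bounded_linear_matrix_of_endo])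
qed

section \<open>Symmetric matrices\<close>

lemma inner_matrix_vector_transpose: "(M *v x) \<bullet> y = x \<bullet> (transpose M *v (y::real^'m))"
  for M :: "real^'n^'m"
  by (metis dot_lmul_matrix inner_commute transpose_matrix_vector transpose_transpose
      vector_transpose_matrix)

lemma inner_symmetric_matrix:
  "transpose W = W \<Longrightarrow> (W *v x) \<bullet> y = x \<bullet> (W *v (y::real^'n))"
  using inner_matrix_vector_transpose[of W x y] by simp

lemma symmetric_matrixI:
  fixes W :: "real^'n^'n"
  assumes "\<And>x y. (W *v x) \<bullet> y = x \<bullet> (W *v y)"
  shows "transpose W = W"
proof -
  have "x \<bullet> (transpose W *v y - W *v y) = 0" for x y
    using assms[of x y] by (simp add: inner_diff_right inner_matrix_vector_transpose)
  hence "transpose W *v y = W *v y" for y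
    by (metis inner_eq_zero_iff right_minus_eq)
  thus ?thesis by (simp add: matrix_eq)
qed

lemma invertible_matrix_inv:
  assumes "invertible (W::real^'n^'n)"
  shows "W ** matrix_inv W = mat 1" "matrix_inv W ** W = mat 1"
  using someI_ex[OF assms[unfolded invertible_def]] unfolding matrix_inv_def by auto

lemma nonneg_quadratic_imp_discriminant_le:
  fixes a b c :: real
  assumes "\<And>r. 0 \<le> c + 2*r*b + r^2*a"
  shows "b^2 \<le> a*c"
proof (cases "a = 0")
  case True
  show ?thesis
  proof (cases "b = 0")
    case False
    have "0 \<le> c + 2*(-(c+1)/(2*b))*b" using assms[of "-(c+1)/(2*b)"] True by simp
    also have "\<dots> = -1" using False by (simp add: field_simps)
    finally show ?thesis by simp
  qed (use True in simp)
next
  case False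
  have a_pos: "a > 0"
  proof (rule ccontr)
    assume "\<not> a > 0"
    hence a_neg: "a < 0" using False by simp
    define r where "r = 1 + \<bar>c\<bar> / (- a)"
    have "\<bar>c\<bar> / (- a) \<ge> 0" using a_neg by (intro divide_nonneg_pos) auto
    hence "r \<ge> 1" unfolding r_def by simp
    hence "r * r \<ge> r * 1" by (intro mult_left_mono) auto
    hence "r^2 * a \<le> r * a" using a_neg by (intro mult_right_mono_neg) (auto simp: power2_eq_square)
    also have "r * a = a - \<bar>c\<bar>" using a_neg by (simp add: r_def field_simps)
    finally have "c + r^2 * a < 0" using a_neg by linarith
    moreover have "0 \<le> c + 2*r*b + r^2*a" "0 \<le> c + 2*(-r)*b + (-r)^2*a" by (rule assms)+
    ultimately show False by simp
  qed
  have "0 \<le> c + 2*(-b/a)*b + (-b/a)^2*a" by (rule assms)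
  also have "\<dots> = c - b^2/a" using a_pos by (simp add: field_simps power2_eq_square)
  finally have "b^2/a \<le> c" by simp
  thus ?thesis using a_pos by (simp add: field_simps mult.commute)
qed

lemma psd_cauchy_schwarz:
  fixes S :: "real^'n^'n"
  assumes S: "transpose S = S" and psd: "\<And>x. 0 \<le> (S *v x) \<bullet> x"
  shows "((S *v z) \<bullet> w)^2 \<le> ((S *v w) \<bullet> w) * ((S *v z) \<bullet> z)"
proof (rule nonneg_quadratic_imp_discriminant_le)
  fix r :: real
  have "0 \<le> (S *v (z + r *\<^sub>R w)) \<bullet> (z + r *\<^sub>R w)" by (rule psd)
  also have "\<dots> = (S *v z) \<bullet> z + 2*r*((S *v z) \<bullet> w) + r^2*((S *v w) \<bullet> w)"
    using inner_symmetric_matrix[OF S, of w z]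
    by (simp add: matrix_vector_right_distrib matrix_vector_mult_scaleR inner_add_left
        inner_add_right power2_eq_square algebra_simps inner_commute)
  finally show "0 \<le> (S *v z) \<bullet> z + 2*r*((S *v z) \<bullet> w) + r^2*((S *v w) \<bullet> w)" .
qed

lemma psd_quadratic_form_eq_0_imp_mult_eq_0:
  fixes S :: "real^'n^'n"
  assumes "transpose S = S" "\<And>x. 0 \<le> (S *v x) \<bullet> x" "(S *v z) \<bullet> z = 0"
  shows "S *v z = 0"
  using psd_cauchy_schwarz[OF assms(1,2), of z "S *v z"] assms(3) by simp

text \<open>The minimum of the quadratic form on the unit sphere is an eigenvalue.\<close>
lemma symmetric_matrix_least_eigenvalue:
  fixes W :: "real^'n^'n"
  assumes W: "transpose W = W"
  shows "\<exists>m. is_eigenvalue W m \<and> (\<forall>z. m * (z \<bullet> z) \<le> (W *v z) \<bullet> z)"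
proof -
  let ?q = "\<lambda>z. (W *v z) \<bullet> z"
  have "continuous_on (sphere 0 1) ?q"
    by (intro continuous_intros bounded_linear.continuous_on[OF matrix_vector_mul_bounded_linear])
  moreover have "sphere (0::real^'n) 1 \<noteq> {}" by simp
  ultimately obtain z0 where z0: "z0 \<in> sphere 0 1"
    and min: "\<And>y. y \<in> sphere 0 1 \<Longrightarrow> ?q z0 \<le> ?q y"
    using continuous_attains_inf[OF compact_sphere] by blast
  define m where "m = ?q z0"
  have lower: "m * (z \<bullet> z) \<le> ?q z" for z
  proof (cases "z = 0")
    case False
    hence nz: "norm z > 0" by simp
    have "m \<le> ?q (z /\<^sub>R norm z)" unfolding m_def by (rule min) (use nz in simp)
    also have "\<dots> = ?q z / (norm z)^2"
      by (simp add: matrix_vector_mult_scaleR power2_eq_square field_simps)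
    finally have "m * (norm z)^2 \<le> ?q z" using nz by (simp add: field_simps)
    thus ?thesis by (simp add: power2_norm_eq_inner)
  qed simp
  let ?S = "W - m *\<^sub>R mat 1"
  have S_apply: "?S *v x = W *v x - m *\<^sub>R x" for x
    by (simp add: matrix_vector_mult_diff_rdistrib scaleR_matrix_vector_assoc[symmetric])
  have S_symm: "transpose ?S = ?S"
    by (rule symmetric_matrixI) (simp add: S_apply inner_diff_left inner_diff_right inner_symmetric_matrix[OF W])
  have S_psd: "0 \<le> (?S *v x) \<bullet> x" for x
    using lower[of x] by (simp add: S_apply inner_diff_left)
  have "z0 \<bullet> z0 = 1" using z0 by (simp add: power2_norm_eq_inner[symmetric])
  hence "(?S *v z0) \<bullet> z0 = 0" unfolding S_apply by (simp add: inner_diff_left m_def)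
  hence "?S *v z0 = 0" by (rule psd_quadratic_form_eq_0_imp_mult_eq_0[OF S_symm S_psd])
  hence "W *v z0 = m *\<^sub>R z0" by (simp add: S_apply)
  moreover have "z0 \<noteq> 0" using z0 by auto
  ultimately show ?thesis using lower unfolding is_eigenvalue_def by blast
qed

lemma least_eigenvalue_le_quadratic_form:
  fixes W :: "real^'n^'n"
  assumes "transpose W = W" and "\<And>l. is_eigenvalue W l \<Longrightarrow> lmin \<le> l"
  shows "lmin * (z \<bullet> z) \<le> (W *v z) \<bullet> z"
proof -
  obtain m where m: "is_eigenvalue W m" "\<And>z. m * (z \<bullet> z) \<le> (W *v z) \<bullet> z"
    using symmetric_matrix_least_eigenvalue[OF assms(1)] by blast
  have "lmin * (z \<bullet> z) \<le> m * (z \<bullet> z)" using assms(2)[OF m(1)] by (intro mult_right_mono) auto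
  with m(2)[of z] show ?thesis by linarith
qed

lemma quadratic_form_le_greatest_eigenvalue:
  fixes W :: "real^'n^'n"
  assumes "transpose W = W" and "\<And>l. is_eigenvalue W l \<Longrightarrow> l \<le> lmax"
  shows "(W *v z) \<bullet> z \<le> lmax * (z \<bullet> z)"
proof -
  have neg_apply: "(- W) *v x = - (W *v x)" for x
    by (simp add: vec_eq_iff matrix_vector_mult_def sum_negf)
  have "transpose (- W) = - W" using assms(1) by (simp add: transpose_def vec_eq_iff)
  moreover have "- lmax \<le> l" if "is_eigenvalue (- W) l" for l
  proof -
    have "is_eigenvalue W (- l)"
      using that unfolding is_eigenvalue_def by (metis neg_apply minus_minus scaleR_minus_left)
    thus ?thesis using assms(2) by fastforce
  qed
  ultimately have "- lmax * (z \<bullet> z) \<le> ((- W) *v z) \<bullet> z"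
    by (rule least_eigenvalue_le_quadratic_form)
  thus ?thesis by (simp add: neg_apply)
qed

lemma positive_definite_matrix_inv:
  fixes W :: "real^'n^'n"
  assumes c: "c > 0" and lower: "\<And>z. c * (z \<bullet> z) \<le> (W *v z) \<bullet> z"
  shows "W ** matrix_inv W = mat 1" "matrix_inv W ** W = mat 1"
proof -
  have "inj ((*v) W)"
  proof (rule injI)
    fix a b assume "W *v a = W *v b"
    hence "W *v (a - b) = 0" by (simp add: matrix_vector_mult_diff_distrib)
    hence "c * ((a - b) \<bullet> (a - b)) \<le> 0" using lower[of "a - b"] by simp
    hence "(a - b) \<bullet> (a - b) = 0" using c by (metis inner_ge_zero mult_le_0_iff not_less order_antisym)
    thus "a = b" by simp
  qed
  hence "invertible W" using matrix_left_invertible_injective invertible_left_inverse by blast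
  thus "W ** matrix_inv W = mat 1" "matrix_inv W ** W = mat 1"
    using invertible_matrix_inv by blast+
qed

section \<open>Lyapunov decay\<close>

lemma symmetric_matrix_inv:
  fixes W :: "real^'n^'n"
  assumes "transpose W = W" "W ** matrix_inv W = mat 1" "matrix_inv W ** W = mat 1"
  shows "transpose (matrix_inv W) = matrix_inv W"
proof -
  let ?P = "matrix_inv W"
  have PW: "transpose ?P ** W = mat 1"
    using arg_cong[OF assms(2), of transpose] assms(1) by (simp add: matrix_transpose_mul)
  have "transpose ?P = transpose ?P ** (W ** ?P)" by (simp add: assms(2) matrix_mul_rid)
  also have "\<dots> = (transpose ?P ** W) ** ?P" by (simp add: matrix_mul_assoc)
  also have "\<dots> = ?P" by (simp add: PW matrix_mul_lid)
  finally show ?thesis .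
qed

lemma matrix_inv_quadratic_form_le:
  fixes W :: "real^'n^'n"
  assumes c: "c > 0" and lower: "\<And>z. c * (z \<bullet> z) \<le> (W *v z) \<bullet> z"
  shows "v \<bullet> (matrix_inv W *v v) \<le> (v \<bullet> v) / c"
proof -
  define z where "z = matrix_inv W *v v"
  have v: "v = W *v z"
    using positive_definite_matrix_inv(1)[OF c lower]
    by (simp add: z_def matrix_vector_mul_assoc)
  have "c * norm z * norm z \<le> norm v * norm z"
    using lower[of z] norm_cauchy_schwarz[of v z]
    by (simp add: v power2_norm_eq_inner[symmetric] power2_eq_square mult.assoc)
  hence "c * norm z \<le> norm v"
    by (cases "norm z = 0") (auto intro: mult_right_le_imp_le)
  hence "norm v * norm z \<le> norm v * (norm v / c)"
    using c by (intro mult_left_mono) (simp_all add: pos_le_divide_eq mult.commute)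
  with norm_cauchy_schwarz[of v z] show ?thesis
    by (simp add: z_def power2_norm_eq_inner[symmetric] power2_eq_square)
qed

lemma matrix_inv_quadratic_form_ge:
  fixes W :: "real^'n^'n"
  assumes W: "transpose W = W" and c: "c > 0"
    and lower: "\<And>z. c * (z \<bullet> z) \<le> (W *v z) \<bullet> z"
    and upper: "\<And>z. (W *v z) \<bullet> z \<le> D * (z \<bullet> z)"
  shows "v \<bullet> v \<le> D * (v \<bullet> (matrix_inv W *v v))"
proof (cases "v = 0")
  case False
  define z where "z = matrix_inv W *v v"
  have v: "v = W *v z"
    using positive_definite_matrix_inv(1)[OF c lower]
    by (simp add: z_def matrix_vector_mul_assoc)
  have psd: "0 \<le> (W *v y) \<bullet> y" for y
    using lower[of y] c by (meson inner_ge_zero mult_nonneg_nonneg less_imp_le order_trans)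
  have "(v \<bullet> v) * (v \<bullet> v) = ((W *v z) \<bullet> v)^2"
    by (simp add: v power2_eq_square)
  also have "\<dots> \<le> ((W *v v) \<bullet> v) * ((W *v z) \<bullet> z)"
    by (rule psd_cauchy_schwarz[OF W psd])
  also have "\<dots> \<le> (v \<bullet> v) * (D * ((W *v z) \<bullet> z))"
    using mult_right_mono[OF upper psd] by (simp add: algebra_simps)
  finally have "v \<bullet> v \<le> D * ((W *v z) \<bullet> z)"
    using False by (simp add: mult_le_cancel_left_pos)
  moreover have "(W *v z) \<bullet> z = v \<bullet> z" by (simp only: v[symmetric])
  ultimately show ?thesis by (simp add: z_def)
qed simp

lemma exponential_decay_of_derivative_bound:
  fixes f f' :: "real \<Rightarrow> real"
  assumes deriv: "\<And>u. (f has_real_derivative f' u) (at u)"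
    and bound: "\<And>u. f' u \<le> - a * f u" and t: "t \<ge> 0"
  shows "f t \<le> exp (- a * t) * f 0"
proof -
  define g where "g u = exp (a * u) * f u" for u
  have "(g has_real_derivative (exp (a * u) * (a * f u + f' u))) (at u)" for u
    unfolding g_def by (auto intro!: derivative_eq_intros deriv simp: algebra_simps)
  moreover have "exp (a * u) * (a * f u + f' u) \<le> 0" for u
    using bound[of u] by (intro mult_nonneg_nonpos) auto
  ultimately have "g t \<le> g 0"
    by (intro DERIV_nonpos_imp_nonincreasing[OF t]) blast
  hence "exp (- a * t) * g t \<le> exp (- a * t) * f 0"
    by (simp add: g_def)
  thus ?thesis by (simp add: g_def mult.assoc[symmetric] exp_add[symmetric])
qed

lemma has_real_derivative_mexp_quadratic_form:
  fixes M P :: "real^'n^'n" and x :: "real^'n"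
  assumes P: "transpose P = P"
  defines "y \<equiv> \<lambda>u. mexp (u *\<^sub>R M) *v x"
  shows "((\<lambda>u. y u \<bullet> (P *v y u)) has_real_derivative 2 * ((M *v y u) \<bullet> (P *v y u))) (at u)"
proof -
  have "(y has_vector_derivative (M *v y u)) (at u)"
    unfolding y_def by (rule has_vector_derivative_mexp_left)
  hence deriv: "((\<lambda>u. y u \<bullet> (P *v y u)) has_vector_derivative
      (y u \<bullet> (P *v (M *v y u)) + (M *v y u) \<bullet> (P *v y u))) (at u)"
    by (intro bounded_bilinear.has_vector_derivative[OF bounded_bilinear_inner]
        bounded_linear.has_vector_derivative[OF matrix_vector_mul_bounded_linear])
  have "y u \<bullet> (P *v (M *v y u)) = (M *v y u) \<bullet> (P *v y u)"
    by (subst inner_commute) (rule inner_symmetric_matrix[OF P])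
  hence "((\<lambda>u. y u \<bullet> (P *v y u)) has_vector_derivative 2 * ((M *v y u) \<bullet> (P *v y u))) (at u)"
    by (intro has_vector_derivative_eq_rhs[OF deriv]) simp
  thus ?thesis by (simp only: has_real_derivative_iff_has_vector_derivative)
qed

text \<open>With \<open>P = W\<inverse>\<close>, the condition on \<open>M ** W\<close> says that \<open>V(y) = y \<bullet> P y\<close> satisfies
  \<open>V' \<le> -2 \<alpha> V\<close> along \<open>y' = M y\<close>; the bounds on \<open>W\<close> translate \<open>V\<close> back into the norm.\<close>
lemma mexp_decay_of_lyapunov:
  fixes M W :: "real^'n^'n" and x :: "real^'n"
  assumes W: "transpose W = W" and c: "c > 0"
    and lower: "\<And>z. c * (z \<bullet> z) \<le> (W *v z) \<bullet> z"
    and upper: "\<And>z. (W *v z) \<bullet> z \<le> D * (z \<bullet> z)"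
    and dissipative: "\<And>z. ((M ** W) *v z) \<bullet> z \<le> - \<alpha> * ((W *v z) \<bullet> z)"
    and t: "t \<ge> 0"
  shows "norm (mexp (t *\<^sub>R M) *v x) \<le> sqrt (D / c) * exp (- \<alpha> * t) * norm x"
proof -
  define P where "P = matrix_inv W"
  have WP: "W *v (P *v v) = v" for v
    using positive_definite_matrix_inv(1)[OF c lower] by (simp add: P_def matrix_vector_mul_assoc)
  have P: "transpose P = P"
    unfolding P_def by (intro symmetric_matrix_inv W positive_definite_matrix_inv[OF c lower])
  have D: "D \<ge> c"
  proof -
    define e :: "real^'n" where "e = axis undefined 1"
    have "e \<bullet> e = 1" by (simp add: e_def)
    hence "c \<le> (W *v e) \<bullet> e" "(W *v e) \<bullet> e \<le> D" using lower[of e] upper[of e] by simp_all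
    thus ?thesis by linarith
  qed
  define y where "y = (\<lambda>u. mexp (u *\<^sub>R M) *v x)"
  define V where "V = (\<lambda>u. y u \<bullet> (P *v y u))"
  have bound: "2 * ((M *v y u) \<bullet> (P *v y u)) \<le> - (2 * \<alpha>) * V u" for u
  proof -
    have "(M *v y u) \<bullet> (P *v y u) = ((M ** W) *v (P *v y u)) \<bullet> (P *v y u)"
      by (simp add: matrix_vector_mul_assoc[symmetric] WP)
    also have "\<dots> \<le> - \<alpha> * ((W *v (P *v y u)) \<bullet> (P *v y u))" by (rule dissipative)
    finally show ?thesis by (simp add: V_def WP inner_commute)
  qed
  have "V t \<le> exp (- (2 * \<alpha>) * t) * V 0"
    using has_real_derivative_mexp_quadratic_form[OF P, of M x]
    by (intro exponential_decay_of_derivative_bound[OF _ bound t]) (simp add: V_def y_def)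
  moreover have "V 0 \<le> (x \<bullet> x) / c"
    using matrix_inv_quadratic_form_le[OF c lower] by (simp add: V_def y_def P_def)
  ultimately have V_t: "V t \<le> exp (- (2 * \<alpha>) * t) * ((x \<bullet> x) / c)"
    using mult_left_mono[of "V 0" "(x \<bullet> x) / c" "exp (- (2 * \<alpha>) * t)"] by simp
  have "norm (y t) ^ 2 \<le> D * V t"
    unfolding V_def P_def power2_norm_eq_inner by (rule matrix_inv_quadratic_form_ge[OF W c lower upper])
  also have "\<dots> \<le> D * (exp (- (2 * \<alpha>) * t) * ((x \<bullet> x) / c))"
    using V_t D c by (intro mult_left_mono) auto
  also have "\<dots> = (sqrt (D / c) * exp (- \<alpha> * t) * norm x) ^ 2"
  proof -
    have "exp (- (2 * \<alpha>) * t) = exp (- \<alpha> * t) ^ 2"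
      by (simp add: power2_eq_square flip: exp_add)
    thus ?thesis using D c by (simp add: power_mult_distrib power2_norm_eq_inner)
  qed
  finally show ?thesis unfolding y_def
    by (rule power2_le_imp_le) (use D c in auto)
qed

section \<open>Controllability Gramian\<close>

definition gram_signal :: "real^'n^'n \<Rightarrow> real^'m^'n \<Rightarrow> real^'n \<Rightarrow> real \<Rightarrow> real^'m" where
  "gram_signal A B z t = transpose B *v (mexp ((- t / 2) *\<^sub>R transpose A) *v z)"

definition gramian_integrand :: "real^'n^'n \<Rightarrow> real^'m^'n \<Rightarrow> real \<Rightarrow> real \<Rightarrow> real^'n^'n" where
  "gramian_integrand A B \<alpha> t = exp (- \<alpha> * t) *\<^sub>R
     (mexp ((- t / 2) *\<^sub>R A) ** B ** transpose B ** mexp ((- t / 2) *\<^sub>R transpose A))"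

lemma gramian_eq_integral: "gramian A B \<alpha> ts = integral {0..ts} (gramian_integrand A B \<alpha>)"
  unfolding gramian_def gramian_integrand_def ..

lemma inner_gramian_integrand:
  "(gramian_integrand A B \<alpha> t *v z) \<bullet> w = exp (- \<alpha> * t) * (gram_signal A B z t \<bullet> gram_signal A B w t)"
proof -
  let ?E = "mexp ((- t / 2) *\<^sub>R A)" and ?E' = "mexp ((- t / 2) *\<^sub>R transpose A)"
  have "transpose ?E = ?E'" by (simp only: transpose_mexp transpose_scalar)
  moreover have "(?E ** B ** transpose B ** ?E') *v z = ?E *v (B *v (transpose B *v (?E' *v z)))"
    by (simp only: matrix_vector_mul_assoc matrix_mul_assoc)
  ultimately have "((?E ** B ** transpose B ** ?E') *v z) \<bullet> w
      = (transpose B *v (?E' *v z)) \<bullet> (transpose B *v (?E' *v w))"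
    by (simp only: inner_matrix_vector_transpose[of ?E] inner_matrix_vector_transpose[of B])
  thus ?thesis unfolding gramian_integrand_def gram_signal_def
    by (simp add: scaleR_matrix_vector_assoc[symmetric])
qed

lemma continuous_on_gramian_integrand: "continuous_on S (gramian_integrand A B \<alpha>)"
proof -
  have "continuous_on S (\<lambda>t::real. - t / 2)" by (intro continuous_intros) auto
  from continuous_on_mexp_sandwich[OF this, of A "B ** transpose B" "transpose A"]
  show ?thesis
    unfolding gramian_integrand_def by (simp add: matrix_mul_assoc) (intro continuous_intros)
qed

lemma bounded_linear_quadratic_form: "bounded_linear (\<lambda>X::real^'n^'n. (X *v z) \<bullet> w)"
  unfolding linear_conv_bounded_linear[symmetric]
  by (rule linearI) (simp_all add: matrix_vector_mult_add_rdistrib inner_add_left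
      scaleR_matrix_vector_assoc[symmetric])

lemma bounded_linear_matrix_vector_mult_left: "bounded_linear (\<lambda>X::real^'n^'m. X *v x)"
  unfolding linear_conv_bounded_linear[symmetric]
  by (rule linearI) (simp_all add: matrix_vector_mult_add_rdistrib scaleR_matrix_vector_assoc[symmetric])

lemma continuous_on_gram_signal: "continuous_on S (gram_signal A B z)"
proof -
  have "continuous_on S (\<lambda>t::real. - t / 2)" by (intro continuous_intros) auto
  from continuous_on_mexp_scaleR[OF this, of "transpose A"]
  show ?thesis unfolding gram_signal_def
    by (intro bounded_linear.continuous_on[OF matrix_vector_mul_bounded_linear]
        bounded_linear.continuous_on[OF bounded_linear_matrix_vector_mult_left])
qed

lemma has_integral_inner_gramian:
  "((\<lambda>t. exp (- \<alpha> * t) * (gram_signal A B z t \<bullet> gram_signal A B w t))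
      has_integral ((gramian A B \<alpha> ts *v z) \<bullet> w)) {0..ts}"
proof -
  have integrable: "gramian_integrand A B \<alpha> integrable_on {0..ts}"
    by (rule integrable_continuous_real, rule continuous_on_gramian_integrand)
  have "((\<lambda>t. (gramian_integrand A B \<alpha> t *v z) \<bullet> w) has_integral
      ((integral {0..ts} (gramian_integrand A B \<alpha>) *v z) \<bullet> w)) {0..ts}"
    using has_integral_linear[OF integrable_integral[OF integrable] bounded_linear_quadratic_form]
    by (simp add: o_def)
  thus ?thesis by (simp add: inner_gramian_integrand gramian_eq_integral)
qed

lemma gramian_symmetric: "transpose (gramian A B \<alpha> ts) = gramian A B \<alpha> ts"
proof (rule symmetric_matrixI)
  fix x y
  have "(gramian A B \<alpha> ts *v x) \<bullet> y = (gramian A B \<alpha> ts *v y) \<bullet> x"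
    using has_integral_unique[OF has_integral_inner_gramian[of \<alpha> A B x y ts]
        has_integral_inner_gramian[of \<alpha> A B y x ts, unfolded inner_commute[of "gram_signal A B y _"]]] .
  thus "(gramian A B \<alpha> ts *v x) \<bullet> y = x \<bullet> (gramian A B \<alpha> ts *v y)" by (simp add: inner_commute)
qed

lemma gramian_quadratic_form_bounds:
  fixes z :: "real^'n"
  assumes "\<alpha> \<ge> 0"
  shows "exp (- \<alpha> * ts) * ((gramian A B 0 ts *v z) \<bullet> z) \<le> (gramian A B \<alpha> ts *v z) \<bullet> z"
    and "(gramian A B \<alpha> ts *v z) \<bullet> z \<le> (gramian A B 0 ts *v z) \<bullet> z"
proof -
  let ?s = "\<lambda>t. gram_signal A B z t \<bullet> gram_signal A B z t"
  have G0: "(?s has_integral (gramian A B 0 ts *v z) \<bullet> z) {0..ts}"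
    using has_integral_inner_gramian[of 0 A B z z ts] by simp
  have G: "((\<lambda>t. exp (- \<alpha> * t) * ?s t) has_integral (gramian A B \<alpha> ts *v z) \<bullet> z) {0..ts}"
    by (rule has_integral_inner_gramian)
  show "exp (- \<alpha> * ts) * ((gramian A B 0 ts *v z) \<bullet> z) \<le> (gramian A B \<alpha> ts *v z) \<bullet> z"
    by (rule has_integral_le[OF has_integral_mult_right[OF G0] G])
      (use assms in \<open>auto intro!: mult_right_mono mult_left_mono\<close>)
  show "(gramian A B \<alpha> ts *v z) \<bullet> z \<le> (gramian A B 0 ts *v z) \<bullet> z"
    by (rule has_integral_le[OF G G0])
      (use assms in \<open>auto intro!: mult_left_le_one_le\<close>)
qed

lemma has_vector_derivative_gram_signal:
  "(gram_signal A B z has_vector_derivative ((- 1 / 2) *\<^sub>R gram_signal A B (transpose A *v z) t))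
    (at t within S)"
proof -
  have "((\<lambda>t::real. - t / 2) has_real_derivative (- 1 / 2)) (at t within S)"
    by (auto intro!: derivative_eq_intros)
  hence "((\<lambda>t::real. - t / 2) has_vector_derivative (- 1 / 2)) (at t within S)"
    by (simp add: has_real_derivative_iff_has_vector_derivative)
  from vector_diff_chain_within[OF this has_vector_derivative_mexp_right[of "transpose A" z]]
  have "((\<lambda>t. mexp ((- t / 2) *\<^sub>R transpose A) *v z) has_vector_derivative
      (- 1 / 2) *\<^sub>R (mexp ((- t / 2) *\<^sub>R transpose A) *v (transpose A *v z))) (at t within S)"
    by (simp only: o_def)
  from bounded_linear.has_vector_derivative[OF matrix_vector_mul_bounded_linear this, of "transpose B"]
  show ?thesis unfolding gram_signal_def by (simp only: matrix_vector_mult_scaleR)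
qed

lemma gram_signal_0 [simp]: "gram_signal A B z 0 = transpose B *v z"
  by (simp add: gram_signal_def)

lemma has_real_derivative_weighted_gram_signal:
  "((\<lambda>t. exp (- \<alpha> * t) * (gram_signal A B z t \<bullet> gram_signal A B z t)) has_real_derivative
      - \<alpha> * (exp (- \<alpha> * t) * (gram_signal A B z t \<bullet> gram_signal A B z t))
      - exp (- \<alpha> * t) * (gram_signal A B z t \<bullet> gram_signal A B (transpose A *v z) t)) (at t within S)"
proof -
  let ?u = "gram_signal A B z" and ?v = "gram_signal A B (transpose A *v z)"
  have u: "(?u has_vector_derivative ((- 1 / 2) *\<^sub>R ?v t)) (at t within S)"
    by (rule has_vector_derivative_gram_signal)
  have "((\<lambda>t. ?u t \<bullet> ?u t) has_real_derivative
      (?u t \<bullet> ((- 1 / 2) *\<^sub>R ?v t) + ((- 1 / 2) *\<^sub>R ?v t) \<bullet> ?u t)) (at t within S)"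
    using bounded_bilinear.has_vector_derivative[OF bounded_bilinear_inner u u]
    by (simp add: has_real_derivative_iff_has_vector_derivative)
  moreover have "((\<lambda>t. exp (- \<alpha> * t)) has_real_derivative exp (- \<alpha> * t) * (- \<alpha>)) (at t within S)"
    by (auto intro!: derivative_eq_intros)
  ultimately have "((\<lambda>t. exp (- \<alpha> * t) * (?u t \<bullet> ?u t)) has_real_derivative
      exp (- \<alpha> * t) * (- \<alpha>) * (?u t \<bullet> ?u t)
      + exp (- \<alpha> * t) * (?u t \<bullet> ((- 1 / 2) *\<^sub>R ?v t) + ((- 1 / 2) *\<^sub>R ?v t) \<bullet> ?u t)) (at t within S)"
    by (auto intro: derivative_eq_intros)
  thus ?thesis by (rule DERIV_cong) (simp add: algebra_simps inner_commute)
qed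

text \<open>Integrate the derivative over \<open>[0, ts]\<close> and drop the nonnegative endpoint value at \<open>ts\<close>.\<close>
lemma gramian_lyapunov_inequality:
  assumes ts: "ts \<ge> 0"
  shows "(A *v (gramian A B \<alpha> ts *v z)) \<bullet> z
    \<le> (transpose B *v z) \<bullet> (transpose B *v z) - \<alpha> * ((gramian A B \<alpha> ts *v z) \<bullet> z)"
proof -
  let ?W = "gramian A B \<alpha> ts"
  let ?u = "gram_signal A B z" and ?v = "gram_signal A B (transpose A *v z)"
  define \<phi> where "\<phi> = (\<lambda>t. exp (- \<alpha> * t) * (?u t \<bullet> ?u t))"
  define \<psi> where "\<psi> = (\<lambda>t. exp (- \<alpha> * t) * (?u t \<bullet> ?v t))"
  have "((\<lambda>t. - \<alpha> * \<phi> t - \<psi> t) has_integral (\<phi> ts - \<phi> 0)) {0..ts}"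
    unfolding \<phi>_def \<psi>_def using has_real_derivative_weighted_gram_signal
    by (intro fundamental_theorem_of_calculus[OF ts])
      (simp add: has_real_derivative_iff_has_vector_derivative)
  moreover have "((\<lambda>t. - \<alpha> * \<phi> t - \<psi> t) has_integral
      (- \<alpha> * ((?W *v z) \<bullet> z) - (?W *v z) \<bullet> (transpose A *v z))) {0..ts}"
    unfolding \<phi>_def \<psi>_def
    by (intro has_integral_diff has_integral_mult_right has_integral_inner_gramian)
  ultimately have "\<phi> ts - \<phi> 0 = - \<alpha> * ((?W *v z) \<bullet> z) - (?W *v z) \<bullet> (transpose A *v z)"
    by (rule has_integral_unique)
  moreover have "\<phi> ts \<ge> 0" "\<phi> 0 = (transpose B *v z) \<bullet> (transpose B *v z)"
    by (simp_all add: \<phi>_def del: transpose_matrix_vector)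
  ultimately show ?thesis
    using inner_matrix_vector_transpose[of A "?W *v z" z] by linarith
qed

section \<open>Positivity of the Gramian\<close>

lemma controllable_imp_eq_0:
  fixes A :: "real^'n^'n" and B :: "real^'m^'n"
  assumes ctrb: "controllable A B"
    and vanish: "\<And>k. transpose B *v (mpow (transpose A) k *v z) = 0"
  shows "z = 0"
proof -
  have "orthogonal z y" if y_in: "y \<in> {(mpow A k ** B) *v w | k w. k < CARD('n)}" for y
  proof -
    obtain k w where y: "y = (mpow A k ** B) *v w" using y_in by blast
    have "transpose (mpow A k ** B) *v z = transpose B *v (mpow (transpose A) k *v z)"
      by (simp only: matrix_transpose_mul transpose_mpow matrix_vector_mul_assoc)
    thus ?thesis
      using vanish[of k] inner_matrix_vector_transpose[of "mpow A k ** B" w z]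
      by (simp add: y orthogonal_def inner_commute del: transpose_matrix_vector)
  qed
  hence "orthogonal z z"
    using orthogonal_to_span ctrb unfolding controllable_def by blast
  thus ?thesis by (simp add: orthogonal_def)
qed

text \<open>\<open>C *v (mpow M k *v z)\<close> is the \<open>k\<close>-th derivative at \<open>0\<close> of \<open>r \<mapsto> C *v (mexp (r *\<^sub>R M) *v z)\<close>.\<close>
lemma mexp_output_eq_0_imp_mpow_output_eq_0:
  fixes M :: "real^'n^'n" and C :: "real^'n^'m"
  assumes a: "a < 0" and vanish: "\<And>r. r \<in> {a<..<0} \<Longrightarrow> C *v (mexp (r *\<^sub>R M) *v z) = 0"
  shows "C *v (mpow M k *v z) = 0"
proof -
  define v where "v = (\<lambda>k r. C *v (mexp (r *\<^sub>R M) *v (mpow M k *v z)))"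
  have v_deriv: "(v k has_vector_derivative v (Suc k) r) (at r)" for k r
  proof -
    have "M *v (mpow M k *v z) = mpow M (Suc k) *v z" by (simp add: matrix_vector_mul_assoc)
    with bounded_linear.has_vector_derivative[OF matrix_vector_mul_bounded_linear
        has_vector_derivative_mexp_right, of C M "mpow M k *v z" r UNIV]
    show ?thesis by (simp only: v_def)
  qed
  have v_zero: "v k r = 0" if "r \<in> {a<..<0}" for k r
    using that
  proof (induction k arbitrary: r)
    case 0
    thus ?case using vanish[of r] by (simp add: v_def)
  next
    case (Suc k)
    have "(v k has_vector_derivative 0) (at r)"
    proof (rule has_vector_derivative_transform_within_open[where S="{a<..<0}"])
      show "((\<lambda>_. 0) has_vector_derivative 0) (at r)" by (rule has_vector_derivative_const)
    qed (use Suc in simp_all)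
    from vector_derivative_unique_at[OF v_deriv[of k r] this] show ?case .
  qed
  have "v k 0 = 0"
  proof (rule continuous_constant_on_closure[of "{a<..<0}"])
    show "continuous_on (closure {a<..<0}) (v k)"
      by (rule continuous_on_vector_derivative) (rule has_vector_derivative_at_within[OF v_deriv])
  qed (use a v_zero in simp_all)
  thus ?thesis by (simp add: v_def)
qed

lemma gramian_positive_definite:
  fixes A :: "real^'n^'n" and B :: "real^'m^'n"
  assumes ctrb: "controllable A B" and ts: "ts > 0" and z: "z \<noteq> 0"
  shows "(gramian A B 0 ts *v z) \<bullet> z > 0"
proof (rule ccontr)
  let ?s = "\<lambda>t. gram_signal A B z t \<bullet> gram_signal A B z t"
  have G: "(?s has_integral (gramian A B 0 ts *v z) \<bullet> z) {0..ts}"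
    using has_integral_inner_gramian[of 0 A B z z ts] by simp
  assume "\<not> (gramian A B 0 ts *v z) \<bullet> z > 0"
  moreover have "(gramian A B 0 ts *v z) \<bullet> z \<ge> 0" by (rule has_integral_nonneg[OF G]) simp
  ultimately have "(?s has_integral 0) (cbox 0 ts)" using G by simp
  hence s_zero: "?s t = 0" if "t \<in> {0..ts}" for t
    by (rule has_integral_0_cbox_imp_0[rotated 2])
      (use ts that in \<open>auto intro!: continuous_intros continuous_on_gram_signal\<close>)
  have "transpose B *v (mexp (r *\<^sub>R transpose A) *v z) = 0" if r: "r \<in> {- ts / 2<..<0}" for r
  proof -
    have "gram_signal A B z (- 2 * r) = 0" using s_zero[of "- 2 * r"] r by simp
    thus ?thesis by (simp add: gram_signal_def del: transpose_matrix_vector)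
  qed
  hence "transpose B *v (mpow (transpose A) k *v z) = 0" for k
    using ts by (intro mexp_output_eq_0_imp_mpow_output_eq_0[of "- ts / 2"]) auto
  with controllable_imp_eq_0[OF ctrb] z show False by blast
qed

lemma gramian_eigenvalue_pos:
  assumes "controllable A B" "ts > 0" "is_eigenvalue (gramian A B 0 ts) l"
  shows "l > 0"
proof -
  obtain v where v: "v \<noteq> 0" "gramian A B 0 ts *v v = l *\<^sub>R v"
    using assms(3) unfolding is_eigenvalue_def by blast
  have "0 < (gramian A B 0 ts *v v) \<bullet> v" by (rule gramian_positive_definite[OF assms(1,2) v(1)])
  hence "0 < l * (v \<bullet> v)" by (simp add: v(2))
  moreover have "v \<bullet> v > 0" using v(1) by simp
  ultimately show ?thesis by (simp add: zero_less_mult_iff)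
qed

section \<open>Orthonormal block matrices\<close>

lemma power2_norm_vec_eq_sum: "(norm (x::real^'a))^2 = (\<Sum>i\<in>UNIV. (x$i)^2)"
  by (simp add: norm_vec_def L2_set_def sum_nonneg)

lemma sum_UNIV_prod: "(\<Sum>c\<in>(UNIV::('a::finite \<times> 'b::finite) set). g c) = (\<Sum>i\<in>UNIV. \<Sum>l\<in>UNIV. g (i,l))"
  unfolding UNIV_Times_UNIV[symmetric] sum.cartesian_product by simp

lemma power2_norm_vec_prod_eq_sum:
  "(norm (x::real^('a::finite \<times> 'b::finite)))^2 = (\<Sum>i\<in>UNIV. \<Sum>l\<in>UNIV. (x$(i,l))^2)"
  unfolding power2_norm_vec_eq_sum sum_UNIV_prod ..

lemma power2_norm_sum_orthonormal:
  fixes xi :: "'i \<Rightarrow> 'a::real_inner"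
  assumes "finite S" and orthonormal: "\<And>k k'. k \<in> S \<Longrightarrow> k' \<in> S \<Longrightarrow> xi k \<bullet> xi k' = (if k = k' then 1 else 0)"
  shows "(norm (\<Sum>k\<in>S. a k *\<^sub>R xi k))^2 = (\<Sum>k\<in>S. (a k)^2)"
proof -
  have "(norm (\<Sum>k\<in>S. a k *\<^sub>R xi k))^2 = (\<Sum>k\<in>S. \<Sum>k'\<in>S. a k * a k' * (xi k \<bullet> xi k'))"
    by (simp add: power2_norm_eq_inner inner_sum_left inner_sum_right algebra_simps sum_distrib_left
        inner_commute)
  also have "\<dots> = (\<Sum>k\<in>S. \<Sum>k'\<in>S. if k = k' then a k * a k' else 0)"
    by (intro sum.cong refl) (simp add: orthonormal)
  finally show ?thesis by (simp add: assms(1) power2_eq_square)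
qed

lemma bessel_inequality:
  fixes xi :: "'i \<Rightarrow> 'a::real_inner"
  assumes "finite S" and "\<And>k k'. k \<in> S \<Longrightarrow> k' \<in> S \<Longrightarrow> xi k \<bullet> xi k' = (if k = k' then 1 else 0)"
  shows "(\<Sum>k\<in>S. (xi k \<bullet> v)^2) \<le> (norm v)^2"
proof -
  let ?p = "\<Sum>k\<in>S. (xi k \<bullet> v) *\<^sub>R xi k"
  have "?p \<bullet> v = (\<Sum>k\<in>S. (xi k \<bullet> v)^2)"
    by (simp add: inner_sum_left power2_eq_square)
  moreover have "?p \<bullet> ?p = (\<Sum>k\<in>S. (xi k \<bullet> v)^2)"
    using power2_norm_sum_orthonormal[OF assms, of "\<lambda>k. xi k \<bullet> v"] by (simp add: power2_norm_eq_inner)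
  moreover have "0 \<le> (v - ?p) \<bullet> (v - ?p)" by simp
  ultimately show ?thesis
    by (simp add: inner_diff_left inner_diff_right inner_commute power2_norm_eq_inner)
qed

text \<open>Row index \<open>(i, l)\<close>: \<open>i\<close> indexes agents, \<open>l\<close> state components, as in \<open>\<Gamma> \<otimes> I\<^sub>n\<close>.\<close>
lemma orthonormal_block_matrix_mult_vector:
  fixes xi :: "'i \<Rightarrow> real^'N::finite" and E :: "'i \<Rightarrow> real^'n^'n"
  shows "((\<chi> r c. \<Sum>k\<in>S. xi k $ fst r * xi k $ fst c * E k $ snd r $ snd c) *v x) $ (i, l)
    = (\<Sum>k\<in>S. xi k $ i * (E k *v (\<chi> l'. xi k \<bullet> (\<chi> i'. x $ (i', l')))) $ l)"
proof -
  have "((\<chi> r c. \<Sum>k\<in>S. xi k $ fst r * xi k $ fst c * E k $ snd r $ snd c) *v x) $ (i, l)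
      = (\<Sum>i'\<in>UNIV. \<Sum>l'\<in>UNIV. (\<Sum>k\<in>S. xi k $ i * xi k $ i' * E k $ l $ l') * x $ (i', l'))"
    by (simp add: matrix_vector_mult_def sum_UNIV_prod)
  also have "\<dots> = (\<Sum>k\<in>S. \<Sum>i'\<in>UNIV. \<Sum>l'\<in>UNIV. xi k $ i * xi k $ i' * E k $ l $ l' * x $ (i', l'))"
    by (simp add: sum_distrib_right sum.swap[of _ S])
  also have "\<dots> = (\<Sum>k\<in>S. xi k $ i * (\<Sum>l'\<in>UNIV. E k $ l $ l' * (\<Sum>i'\<in>UNIV. xi k $ i' * x $ (i', l'))))"
    by (intro sum.cong refl)
      (simp add: sum_distrib_left sum_distrib_right sum.swap[of _ "UNIV::'N set"] mult.assoc mult.left_commute)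
  finally show ?thesis by (simp add: matrix_vector_mult_def inner_vec_def)
qed

text \<open>In the orthonormal coordinates \<open>xi k\<close> the matrix acts blockwise by \<open>E k\<close>, so by Parseval and
  Bessel its norm is at most the largest block norm.\<close>
lemma norm_orthonormal_block_matrix_le:
  fixes xi :: "'i \<Rightarrow> real^'N::finite" and E :: "'i \<Rightarrow> real^'n^'n" and x :: "real^('N \<times> 'n)"
  assumes S: "finite S"
    and orthonormal: "\<And>k k'. k \<in> S \<Longrightarrow> k' \<in> S \<Longrightarrow> xi k \<bullet> xi k' = (if k = k' then 1 else 0)"
    and bound: "\<And>k y. k \<in> S \<Longrightarrow> norm (E k *v y) \<le> L * norm y" and L: "L \<ge> 0"
  shows "norm ((\<chi> r c. \<Sum>k\<in>S. xi k $ fst r * xi k $ fst c * E k $ snd r $ snd c) *v x) \<le> L * norm x"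
proof -
  define col where "col l = (\<chi> i. x $ (i, l))" for l
  define d where "d k = E k *v (\<chi> l. xi k \<bullet> col l)" for k
  let ?P = "(\<chi> r c. \<Sum>k\<in>S. xi k $ fst r * xi k $ fst c * E k $ snd r $ snd c) :: real^('N \<times> 'n)^('N \<times> 'n)"
  have "(norm (?P *v x))^2 = (\<Sum>l\<in>UNIV. (norm (\<Sum>k\<in>S. (d k $ l) *\<^sub>R xi k))^2)"
    unfolding power2_norm_vec_prod_eq_sum orthonormal_block_matrix_mult_vector
    by (subst sum.swap) (simp add: power2_norm_vec_eq_sum sum_component d_def col_def mult.commute)
  also have "\<dots> = (\<Sum>k\<in>S. (norm (d k))^2)"
    by (simp only: power2_norm_sum_orthonormal[OF S orthonormal]) (simp add: power2_norm_vec_eq_sum sum.swap[of _ S])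
  also have "\<dots> \<le> (\<Sum>k\<in>S. L^2 * (norm (\<chi> l. xi k \<bullet> col l))^2)"
  proof (rule sum_mono)
    fix k assume "k \<in> S"
    hence "(norm (d k))^2 \<le> (L * norm (\<chi> l. xi k \<bullet> col l))^2"
      unfolding d_def using bound by (intro power_mono) auto
    thus "(norm (d k))^2 \<le> L^2 * (norm (\<chi> l. xi k \<bullet> col l))^2" by (simp add: power_mult_distrib)
  qed
  also have "\<dots> = L^2 * (\<Sum>l\<in>UNIV. \<Sum>k\<in>S. (xi k \<bullet> col l)^2)"
    by (simp add: sum_distrib_left power2_norm_vec_eq_sum sum.swap[of _ S])
  also have "\<dots> \<le> L^2 * (\<Sum>l\<in>UNIV. (norm (col l))^2)"
    by (intro mult_left_mono sum_mono bessel_inequality[OF S orthonormal]) auto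
  also have "\<dots> = (L * norm x)^2"
    by (simp add: power2_norm_vec_prod_eq_sum power2_norm_vec_eq_sum col_def sum.swap[of _ "UNIV::'n set"] power_mult_distrib)
  finally show ?thesis by (rule power2_le_imp_le) (use L in simp)
qed

section \<open>Paths and energies\<close>

fun path_energy :: "('a \<Rightarrow> real) \<Rightarrow> 'a \<Rightarrow> 'a list \<Rightarrow> real" where
  "path_energy f x [] = 0"
| "path_energy f x (y # ys) = (f x - f y)^2 + path_energy f y ys"

lemma path_energy_nonneg: "path_energy f x xs \<ge> 0"
  by (induction xs arbitrary: x) auto

lemma power2_add_le_weighted:
  fixes a b B :: real and n :: nat
  assumes "b^2 \<le> n * B" "B \<ge> 0"
  shows "(a + b)^2 \<le> (1 + n) * (a^2 + B)"
proof (cases "n = 0")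
  case True
  thus ?thesis using assms by simp
next
  case False
  hence n: "real n > 0" by simp
  have "0 \<le> (n * a - b)^2 / n" using n by simp
  also have "(n * a - b)^2 / n = n * a^2 - 2 * a * b + b^2 / n"
    using n by (simp add: power2_eq_square field_simps)
  finally have "(a + b)^2 \<le> (1 + n) * a^2 + (1 + 1 / n) * b^2"
    by (simp add: power2_eq_square algebra_simps add_divide_distrib)
  also have "(1 + 1 / n) * b^2 \<le> (1 + 1 / n) * (n * B)"
    using assms(1) n by (intro mult_left_mono) auto
  also have "(1 + 1 / n) * (n * B) = (1 + n) * B" using n by (simp add: field_simps)
  finally show ?thesis by (simp add: algebra_simps)
qed

lemma rtrancl_path_diff_power2_le:
  assumes "rtrancl_path E x xs y"
  shows "(f x - f y)^2 \<le> length xs * path_energy f x xs"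
  using assms
proof (induction rule: rtrancl_path.induct)
  case (step x x' xs z)
  have "(f x - f z)^2 = ((f x - f x') + (f x' - f z))^2" by simp
  also have "\<dots> \<le> (1 + length xs) * ((f x - f x')^2 + path_energy f x' xs)"
    by (rule power2_add_le_weighted[OF step.IH path_energy_nonneg])
  finally show ?case by simp
qed simp

text \<open>The second conjunct sums the first one over all suffixes of the path.\<close>
lemma rtrancl_path_power2_le:
  assumes "rtrancl_path E x xs y"
  shows "(f x)^2 \<le> (length xs + 1) * (path_energy f x xs + (f y)^2)
     \<and> (\<Sum>w\<leftarrow>x # xs. (f w)^2) \<le> (length xs + 1) * (length xs + 2) / 2 * (path_energy f x xs + (f y)^2)"
  using assms
proof (induction rule: rtrancl_path.induct)
  case (step x x' xs z)
  let ?n = "length xs" and ?L = "path_energy f x' xs + (f z)^2" and ?d = "(f x - f x')^2"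
  have L: "?L \<ge> 0" using path_energy_nonneg[of f x' xs] by simp
  have head: "(f x)^2 \<le> (?n + 2) * (?d + ?L)"
  proof -
    have "(f x)^2 = ((f x - f x') + f x')^2" by simp
    also have "\<dots> \<le> (1 + (?n + 1)) * (?d + ?L)"
      by (rule power2_add_le_weighted) (use step.IH L in simp_all)
    finally show ?thesis by (simp add: algebra_simps)
  qed
  have "(\<Sum>w\<leftarrow>x # x' # xs. (f w)^2) \<le> (?n + 2) * (?d + ?L) + (?n + 1) * (?n + 2) / 2 * ?L"
    using head step.IH by simp
  also have "\<dots> \<le> (?n + 2) * (?d + ?L) + (?n + 1) * (?n + 2) / 2 * (?d + ?L)"
    by (intro add_left_mono mult_left_mono) auto
  also have "\<dots> = (?n + 2) * (?n + 3) / 2 * (?d + ?L)"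
    by (simp add: field_simps)
  finally show ?case using head by (simp add: algebra_simps)
qed simp

lemma rtrancl_path_energy_le:
  fixes a :: "'a \<Rightarrow> 'a \<Rightarrow> real"
  assumes "rtrancl_path E x xs y" "distinct (x # xs)"
    and edge: "\<And>i j. E i j \<Longrightarrow> a i j = 1" and nonneg: "\<And>i j. a i j \<ge> 0"
    and sym: "\<And>i j. E i j \<Longrightarrow> E j i"
  shows "2 * path_energy f x xs \<le> (\<Sum>i\<in>set (x # xs). \<Sum>j\<in>set (x # xs). a i j * (f i - f j)^2)"
  using assms(1,2)
proof (induction rule: rtrancl_path.induct)
  case (base x)
  thus ?case by (simp add: nonneg)
next
  case (step x x' xs z)
  let ?T = "set (x' # xs)" and ?g = "\<lambda>i j. a i j * (f i - f j)^2"
  have g_nonneg: "?g i j \<ge> 0" for i j using nonneg[of i j] by simp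
  have "?g x x' \<le> (\<Sum>j\<in>?T. ?g x j)"
    by (rule member_le_sum) (use g_nonneg in auto)
  moreover have "?g x' x \<le> (\<Sum>i\<in>?T. ?g i x)"
    by (rule member_le_sum[of x' ?T "\<lambda>i. ?g i x"]) (use g_nonneg in auto)
  moreover have "?g x x' = (f x - f x')^2" "?g x' x = (f x - f x')^2"
    using edge[OF step.hyps(1)] edge[OF sym[OF step.hyps(1)]] by (simp_all add: power2_commute)
  moreover have "x \<notin> ?T" using step.prems by simp
  hence "(\<Sum>i\<in>insert x ?T. \<Sum>j\<in>insert x ?T. ?g i j) =
      ?g x x + (\<Sum>j\<in>?T. ?g x j) + ((\<Sum>i\<in>?T. ?g i x) + (\<Sum>i\<in>?T. \<Sum>j\<in>?T. ?g i j))"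
    by (simp add: sum.distrib)
  moreover have "2 * path_energy f x' xs \<le> (\<Sum>i\<in>?T. \<Sum>j\<in>?T. ?g i j)"
    using step.IH step.prems by simp
  ultimately show ?case by simp
qed

lemma rtranclp_imp_distinct_rtrancl_path:
  fixes E :: "'a::finite \<Rightarrow> 'a \<Rightarrow> bool"
  assumes "E\<^sup>*\<^sup>* x y"
  obtains xs where "rtrancl_path E x xs y" "distinct (x # xs)" "length xs < CARD('a)"
proof -
  obtain xs where P: "rtrancl_path E x xs y" and D: "distinct (x # xs)"
    using assms rtranclp_eq_rtrancl_path rtrancl_path_distinct by metis
  have "length xs + 1 = card (set (x # xs))" using D distinct_card by fastforce
  also have "\<dots> \<le> CARD('a)" by (rule card_mono) auto
  finally show ?thesis using that P D by simp
qed

section \<open>Eigenvalues of the grounded Laplacian\<close>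

lemma exists_max_abs_component: "\<exists>i0. \<forall>j. \<bar>v $ j\<bar> \<le> \<bar>v $ i0\<bar>"
  for v :: "real^'N"
proof -
  have "Max (range (\<lambda>j. \<bar>v $ j\<bar>)) \<in> range (\<lambda>j. \<bar>v $ j\<bar>)" by (intro Max_in) auto
  then obtain i0 where "Max (range (\<lambda>j. \<bar>v $ j\<bar>)) = \<bar>v $ i0\<bar>" by blast
  moreover have "\<bar>v $ j\<bar> \<le> Max (range (\<lambda>j. \<bar>v $ j\<bar>))" for j by (intro Max_ge) auto
  ultimately show ?thesis by metis
qed

lemma lambda_H_pos:
  assumes "N \<ge> 1"
  shows "lambda_H N > 0"
proof -
  have "real N ^ 2 - real N \<ge> 0" using assms by (simp add: power2_eq_square)
  hence "real N ^ 2 - real N + 4 > 0" by linarith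
  thus ?thesis using assms by (simp add: lambda_H_def)
qed

lemma lambda_H_le:
  fixes N :: nat and K l :: real
  assumes "1 \<le> K * l" "4 * K \<le> real N * (real N ^ 2 - real N + 4)" "N \<ge> 1" "l > 0"
  shows "lambda_H N \<le> l"
proof -
  have K: "K > 0" using assms(1,4) by (metis mult_nonpos_nonneg not_le less_imp_le zero_less_one le_less_trans)
  have "real N * (real N ^ 2 - real N + 4) > 0"
    using lambda_H_pos[OF assms(3)] by (simp add: lambda_H_def zero_less_divide_iff)
  hence "lambda_H N \<le> 1 / K" using K assms(2) by (simp add: lambda_H_def field_simps)
  also have "\<dots> \<le> l" using K assms(1) by (simp add: field_simps mult.commute)
  finally show ?thesis .
qed

lemma one_le_mult_of_lambda_H_le:
  assumes "lambda_H N \<le> l" "\<mu> \<ge> 1 / lambda_H N" "N \<ge> 1"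
  shows "1 \<le> l * \<mu>"
proof -
  have "lambda_H N > 0" using lambda_H_pos[OF assms(3)] .
  hence "lambda_H N * (1 / lambda_H N) \<le> l * \<mu>"
    using assms by (intro mult_mono) auto
  thus ?thesis using \<open>lambda_H N > 0\<close> by simp
qed

lemma inner_self_le_card_max_power2:
  fixes v :: "real^'N"
  assumes "\<And>j. \<bar>v $ j\<bar> \<le> \<bar>v $ i0\<bar>"
  shows "v \<bullet> v \<le> CARD('N) * (v $ i0)^2"
proof -
  have "v \<bullet> v = (\<Sum>i\<in>UNIV. (v $ i)^2)" by (simp add: inner_vec_def power2_eq_square)
  also have "\<dots> \<le> (\<Sum>i\<in>(UNIV::'N set). (v $ i0)^2)"
    using assms by (intro sum_mono) (simp add: abs_le_square_iff)
  finally show ?thesis by simp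
qed

lemma triangular_number_bound:
  fixes m N :: nat
  assumes "m \<le> N"
  shows "real m * (real m + 1) / 2 + real (N - m) * real m \<le> real N * (real N + 1) / 2"
proof -
  have "0 \<le> (real N - real m)^2 + (real N - real m)" using assms by simp
  thus ?thesis using assms by (simp add: of_nat_diff power2_eq_square field_simps)
qed

context
  fixes adj :: "nat \<Rightarrow> 'N::finite \<Rightarrow> 'N \<Rightarrow> bool" and pin :: "nat \<Rightarrow> 'N \<Rightarrow> bool" and p :: nat
  assumes no_loop: "\<And>i. \<not> adj p i i" and undirected: "\<And>i k. adj p i k = adj p k i"
begin

definition edge_energy :: "real^'N \<Rightarrow> real" where
  "edge_energy v = (\<Sum>i\<in>UNIV. \<Sum>j\<in>UNIV. aij adj p i j * (v$i - v$j)^2) / 2"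

definition pin_energy :: "real^'N \<Rightarrow> real" where
  "pin_energy v = (\<Sum>i\<in>UNIV. if pin p i then (v$i)^2 else 0)"

lemma aij_simps:
  "aij adj p i i = 0" "aij adj p i j = aij adj p j i" "aij adj p i j \<ge> 0"
  "adj p i j \<Longrightarrow> aij adj p i j = 1" "\<not> adj p i j \<Longrightarrow> aij adj p i j = 0"
  using no_loop undirected by (auto simp: aij_def)

lemma pin_energy_nonneg: "pin_energy v \<ge> 0"
  unfolding pin_energy_def by (intro sum_nonneg) auto

lemma Hmat_mult_vector_component:
  "(Hmat adj pin p *v v) $ i = (\<Sum>j\<in>UNIV. aij adj p i j * (v$i - v$j)) + (if pin p i then v$i else 0)"
proof -
  let ?d = "(\<Sum>k\<in>UNIV. aij adj p i k) + (if pin p i then 1 else 0)"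
  have entry: "Hmat adj pin p $ i $ j = - aij adj p i j + (if i = j then ?d else 0)" for j
    by (auto simp: Hmat_def laplacian_def aij_simps)
  have "(Hmat adj pin p *v v) $ i = (\<Sum>j\<in>UNIV. (- aij adj p i j + (if i = j then ?d else 0)) * v$j)"
    by (simp add: matrix_vector_mult_def entry)
  also have "\<dots> = (\<Sum>j\<in>UNIV. - (aij adj p i j * v$j) + (if i = j then ?d * v$i else 0))"
    by (intro sum.cong refl) (auto simp: aij_simps)
  also have "\<dots> = - (\<Sum>j\<in>UNIV. aij adj p i j * v$j) + ?d * v$i"
    by (simp add: sum_subtractf)
  also have "\<dots> = (\<Sum>j\<in>UNIV. aij adj p i j * (v$i - v$j)) + (if pin p i then v$i else 0)"
    by (simp add: right_diff_distrib sum_subtractf sum_distrib_right sum_distrib_left algebra_simps)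
  finally show ?thesis .
qed

lemma Hmat_symmetric: "transpose (Hmat adj pin p) = Hmat adj pin p"
  using aij_simps(2) by (auto simp: Hmat_def laplacian_def transpose_def vec_eq_iff)

lemma Hmat_quadratic_form: "(Hmat adj pin p *v v) \<bullet> v = edge_energy v + pin_energy v"
proof -
  define X where "X = (\<Sum>i\<in>UNIV. \<Sum>j\<in>UNIV. aij adj p i j * (v$i - v$j) * v$i)"
  have "(Hmat adj pin p *v v) \<bullet> v = (\<Sum>i\<in>UNIV. (Hmat adj pin p *v v)$i * v$i)"
    by (simp add: inner_vec_def)
  also have "\<dots> = (\<Sum>i\<in>UNIV. (\<Sum>j\<in>UNIV. aij adj p i j * (v$i - v$j)) * v$i
      + (if pin p i then (v$i)^2 else 0))"
    by (intro sum.cong refl) (simp add: Hmat_mult_vector_component distrib_right power2_eq_square)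
  also have "\<dots> = X + pin_energy v"
    by (simp add: X_def pin_energy_def sum.distrib sum_distrib_right)
  finally have quadratic: "(Hmat adj pin p *v v) \<bullet> v = X + pin_energy v" .
  have "X = (\<Sum>j\<in>UNIV. \<Sum>i\<in>UNIV. aij adj p i j * (v$i - v$j) * v$i)"
    unfolding X_def by (rule sum.swap)
  also have "\<dots> = (\<Sum>i\<in>UNIV. \<Sum>j\<in>UNIV. aij adj p i j * (v$j - v$i) * v$j)"
    by (simp add: aij_simps(2))
  finally have X_swap: "X = (\<Sum>i\<in>UNIV. \<Sum>j\<in>UNIV. aij adj p i j * (v$j - v$i) * v$j)" .
  have "X + X = (\<Sum>i\<in>UNIV. \<Sum>j\<in>UNIV.
      aij adj p i j * (v$i - v$j) * v$i + aij adj p i j * (v$j - v$i) * v$j)"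
    by (subst (2) X_swap) (simp add: X_def sum.distrib)
  also have "\<dots> = (\<Sum>i\<in>UNIV. \<Sum>j\<in>UNIV. aij adj p i j * (v$i - v$j)^2)"
    by (intro sum.cong refl) (simp add: power2_eq_square algebra_simps)
  finally have "X + X = (\<Sum>i\<in>UNIV. \<Sum>j\<in>UNIV. aij adj p i j * (v$i - v$j)^2)" .
  with quadratic show ?thesis by (simp add: edge_energy_def)
qed

lemma path_energy_le_edge_energy:
  assumes "rtrancl_path (adj p) x xs y" "distinct (x # xs)"
  shows "path_energy (\<lambda>i. v$i) x xs \<le> edge_energy v"
proof -
  have "2 * path_energy (\<lambda>i. v$i) x xs \<le>
      (\<Sum>i\<in>set (x # xs). \<Sum>j\<in>set (x # xs). aij adj p i j * (v$i - v$j)^2)"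
    by (rule rtrancl_path_energy_le[OF assms]) (auto simp: aij_simps undirected)
  also have "\<dots> \<le> (\<Sum>i\<in>UNIV. \<Sum>j\<in>set (x # xs). aij adj p i j * (v$i - v$j)^2)"
    by (rule sum_mono2) (auto intro!: sum_nonneg simp: aij_simps)
  also have "\<dots> \<le> (\<Sum>i\<in>UNIV. \<Sum>j\<in>UNIV. aij adj p i j * (v$i - v$j)^2)"
    by (intro sum_mono sum_mono2) (auto simp: aij_simps)
  finally show ?thesis unfolding edge_energy_def by simp
qed

text \<open>Pinned case: along a path from the largest entry to a pinned node, the entries are controlled by
  the energy, and the remaining nodes by the largest entry.\<close>
lemma eigenvalue_bound_pinned:
  assumes ev: "Hmat adj pin p *v v = l *\<^sub>R v" and v: "v \<noteq> 0"
    and max: "\<And>j. \<bar>v $ j\<bar> \<le> \<bar>v $ i0\<bar>"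
    and reach: "(adj p)\<^sup>*\<^sup>* i0 j" and pinned: "pin p j"
  shows "1 \<le> real CARD('N) * (real CARD('N) + 1) / 2 * l"
proof -
  let ?N = "CARD('N)"
  obtain xs where P: "rtrancl_path (adj p) i0 xs j" and D: "distinct (i0 # xs)"
    and len: "length xs < ?N"
    using rtranclp_imp_distinct_rtrancl_path[OF reach] by blast
  let ?n = "length xs" and ?T = "set (i0 # xs)"
  let ?L = "path_energy (\<lambda>i. v$i) i0 xs + (v$j)^2"
  have L: "0 \<le> ?L" using path_energy_nonneg[of "\<lambda>i. v$i" i0 xs] by simp
  have "(v$j)^2 \<le> pin_energy v"
    unfolding pin_energy_def using pinned member_le_sum[of j UNIV "\<lambda>i. if pin p i then (v$i)^2 else 0"]
    by simp
  moreover have "path_energy (\<lambda>i. v$i) i0 xs \<le> edge_energy v"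
    by (rule path_energy_le_edge_energy[OF P D])
  moreover have "edge_energy v + pin_energy v = l * (v \<bullet> v)"
    using Hmat_quadratic_form[of v] ev by simp
  ultimately have "?L \<le> l * (v \<bullet> v)" by linarith
  have path_bounds: "(v$i0)^2 \<le> (?n + 1) * ?L"
    "(\<Sum>w\<in>?T. (v$w)^2) \<le> (?n + 1) * (?n + 2) / 2 * ?L"
    using rtrancl_path_power2_le[OF P, of "\<lambda>i. v$i"] D by (simp_all add: sum_list_distinct_conv_sum_set)
  have card_T: "card ?T = ?n + 1" using D distinct_card by fastforce
  have "(\<Sum>w\<in>UNIV - ?T. (v$w)^2) \<le> (\<Sum>w\<in>UNIV - ?T. (v$i0)^2)"
    using max by (intro sum_mono) (simp add: abs_le_square_iff)
  also have "\<dots> \<le> real (?N - (?n + 1)) * ((?n + 1) * ?L)"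
    using card_T path_bounds(1) by (simp add: card_Diff_subset mult_left_mono)
  finally have "v \<bullet> v \<le> (?n + 1) * (?n + 2) / 2 * ?L + real (?N - (?n + 1)) * ((?n + 1) * ?L)"
    using path_bounds(2) sum.subset_diff[of ?T UNIV "\<lambda>w. (v$w)^2"]
    by (simp add: inner_vec_def power2_eq_square)
  also have "\<dots> = (real (?n + 1) * (real (?n + 1) + 1) / 2 + real (?N - (?n + 1)) * real (?n + 1)) * ?L"
    by (simp add: algebra_simps)
  also have "\<dots> \<le> ?N * (?N + 1) / 2 * ?L"
    using triangular_number_bound[of "?n + 1" ?N] len L
    by (intro mult_right_mono) (simp_all add: algebra_simps)
  also have "\<dots> \<le> ?N * (?N + 1) / 2 * (l * (v \<bullet> v))"
    using \<open>?L \<le> l * (v \<bullet> v)\<close> by (intro mult_left_mono) auto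
  finally have "1 * (v \<bullet> v) \<le> (real ?N * (real ?N + 1) / 2 * l) * (v \<bullet> v)"
    by (simp add: algebra_simps)
  moreover have "v \<bullet> v > 0" using v by simp
  ultimately show ?thesis by (rule mult_right_le_imp_le)
qed

lemma Hmat_mult_reachable_indicator:
  assumes unpinned: "\<And>j. (adj p)\<^sup>*\<^sup>* i0 j \<Longrightarrow> \<not> pin p j"
  shows "Hmat adj pin p *v (\<chi> j. if (adj p)\<^sup>*\<^sup>* i0 j then 1 else 0) = 0"
proof -
  let ?ind = "\<chi> j. if (adj p)\<^sup>*\<^sup>* i0 j then 1 else (0::real)"
  have closed: "(adj p)\<^sup>*\<^sup>* i0 i \<longleftrightarrow> (adj p)\<^sup>*\<^sup>* i0 j" if "adj p i j" for i j
    using that undirected[of i j]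
    by (metis rtranclp.rtrancl_into_rtrancl)
  have "(Hmat adj pin p *v ?ind) $ i = 0" for i
  proof -
    have "aij adj p i j * (?ind $ i - ?ind $ j) = 0" for j
      using closed[of i j] by (cases "adj p i j") (auto simp: aij_simps)
    moreover have "(if pin p i then ?ind $ i else 0) = 0" using unpinned[of i] by auto
    ultimately show ?thesis by (simp only: Hmat_mult_vector_component) simp
  qed
  thus ?thesis by (simp add: vec_eq_iff)
qed

text \<open>Unpinned case: the indicator of the component of the largest entry lies in the kernel, so
  \<open>v\<close> is orthogonal to it and changes sign inside that component.\<close>
lemma eigenvalue_bound_unpinned:
  assumes ev: "Hmat adj pin p *v v = l *\<^sub>R v" and v: "v \<noteq> 0" and l: "l > 0"
    and max: "\<And>j. \<bar>v $ j\<bar> \<le> \<bar>v $ i0\<bar>"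
    and unpinned: "\<And>j. (adj p)\<^sup>*\<^sup>* i0 j \<Longrightarrow> \<not> pin p j"
  shows "1 \<le> real CARD('N) * (real CARD('N) - 1) * l"
proof -
  let ?N = "CARD('N)"
  define C where "C = {j. (adj p)\<^sup>*\<^sup>* i0 j}"
  define ind :: "real^'N" where "ind = (\<chi> j. if j \<in> C then 1 else 0)"
  have "l * (ind \<bullet> v) = ind \<bullet> (Hmat adj pin p *v v)" by (simp add: ev)
  also have "\<dots> = (Hmat adj pin p *v ind) \<bullet> v"
    by (rule inner_symmetric_matrix[OF Hmat_symmetric, symmetric])
  also have "\<dots> = 0"
    using Hmat_mult_reachable_indicator[OF unpinned] by (simp add: ind_def C_def)
  finally have "ind \<bullet> v = 0" using l by simp
  moreover have "ind \<bullet> v = (\<Sum>i\<in>UNIV. if i \<in> C then v$i else 0)"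
    unfolding inner_vec_def by (intro sum.cong refl) (simp add: ind_def)
  ultimately have sum_C: "(\<Sum>j\<in>C. v$j) = 0" by (simp add: sum.inter_restrict[symmetric])
  have "\<exists>i1\<in>C. v$i1 * v$i0 \<le> 0"
  proof (rule ccontr)
    assume "\<not> ?thesis"
    hence "0 < (\<Sum>j\<in>C. v$j * v$i0)"
      by (intro sum_pos) (auto simp: C_def not_le)
    also have "\<dots> = 0" using sum_C by (simp add: sum_distrib_right[symmetric])
    finally show False by simp
  qed
  then obtain i1 where "(adj p)\<^sup>*\<^sup>* i0 i1" and sign: "v$i1 * v$i0 \<le> 0" by (auto simp: C_def)
  then obtain xs where P: "rtrancl_path (adj p) i0 xs i1" and D: "distinct (i0 # xs)"
    and len: "length xs < ?N"
    using rtranclp_imp_distinct_rtrancl_path by blast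
  have "(v$i0 - v$i1)^2 = (v$i0)^2 - 2 * (v$i1 * v$i0) + (v$i1)^2"
    by (simp add: power2_eq_square algebra_simps)
  hence "(v$i0)^2 \<le> (v$i0 - v$i1)^2" using sign zero_le_power2[of "v$i1"] by linarith
  also have "\<dots> \<le> length xs * path_energy (\<lambda>i. v$i) i0 xs"
    by (rule rtrancl_path_diff_power2_le[OF P])
  also have "\<dots> \<le> (?N - 1) * (edge_energy v + pin_energy v)"
    using len path_energy_le_edge_energy[OF P D, of v] pin_energy_nonneg[of v] path_energy_nonneg
    by (intro mult_mono) auto
  also have "\<dots> = (?N - 1) * (l * (v \<bullet> v))" using Hmat_quadratic_form[of v] ev by simp
  finally have "?N * (v$i0)^2 \<le> ?N * ((?N - 1) * (l * (v \<bullet> v)))"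
    by (intro mult_left_mono) auto
  with inner_self_le_card_max_power2[OF max]
  have "1 * (v \<bullet> v) \<le> (real ?N * (real ?N - 1) * l) * (v \<bullet> v)"
    by (simp add: of_nat_diff algebra_simps)
  moreover have "v \<bullet> v > 0" using v by simp
  ultimately show ?thesis by (rule mult_right_le_imp_le)
qed

lemma Hmat_eigenvalue_ge_lambda_H:
  assumes ev: "Hmat adj pin p *v v = l *\<^sub>R v" and v: "v \<noteq> 0" and l: "l > 0"
  shows "lambda_H CARD('N) \<le> l"
proof -
  let ?N = "real CARD('N)"
  have N: "CARD('N) \<ge> 1" by (simp add: Suc_le_eq)
  obtain i0 where max: "\<And>j. \<bar>v $ j\<bar> \<le> \<bar>v $ i0\<bar>" using exists_max_abs_component by blast
  show ?thesis
  proof (cases "\<exists>j. (adj p)\<^sup>*\<^sup>* i0 j \<and> pin p j")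
    case True
    with eigenvalue_bound_pinned[OF ev v max] have "1 \<le> ?N * (?N + 1) / 2 * l" by blast
    moreover have "0 \<le> ?N * ((?N - 1) * (?N - 2))"
    proof (cases "CARD('N) = 1")
      case False
      with N have "CARD('N) \<ge> 2" by linarith
      thus ?thesis by simp
    qed simp
    hence "2 * (?N * (?N + 1)) \<le> ?N * (?N ^ 2 - ?N + 4)"
      unfolding power2_eq_square by (simp add: algebra_simps)
    hence "4 * (?N * (?N + 1) / 2) \<le> ?N * (?N ^ 2 - ?N + 4)" by simp
    ultimately show ?thesis using N l by (rule lambda_H_le)
  next
    case False
    with eigenvalue_bound_unpinned[OF ev v l max] have "1 \<le> ?N * (?N - 1) * l" by blast
    moreover have "0 \<le> ?N * ((?N - 5 / 2)^2 + 7 / 4)" by simp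
    hence "4 * (?N * (?N - 1)) \<le> ?N * (?N ^ 2 - ?N + 4)"
      unfolding power2_eq_square by (simp add: algebra_simps)
    ultimately show ?thesis using N l by (rule lambda_H_le)
  qed
qed

end

section \<open>Closed-loop decay\<close>

text \<open>The gain absorbs the \<open>B B\<^sup>T\<close> term of the Lyapunov inequality.\<close>
lemma gramian_closed_loop_dissipative:
  fixes A :: "real^'n^'n" and B :: "real^'m^'n" and \<alpha> ts :: real
  defines "W \<equiv> gramian A B \<alpha> ts"
  assumes ts: "ts \<ge> 0" and W_inv: "matrix_inv W ** W = mat 1" and gain: "1 \<le> k"
  shows "(((A - k *\<^sub>R (B ** transpose B ** matrix_inv W)) ** W) *v z) \<bullet> z \<le> - \<alpha> * ((W *v z) \<bullet> z)"
proof -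
  let ?u = "transpose B *v z"
  have "matrix_inv W *v (W *v z) = z" using W_inv by (simp add: matrix_vector_mul_assoc)
  hence "((A - k *\<^sub>R (B ** transpose B ** matrix_inv W)) ** W) *v z = A *v (W *v z) - k *\<^sub>R (B *v ?u)"
    by (simp add: matrix_vector_mul_assoc[symmetric] matrix_vector_mult_diff_rdistrib
        scaleR_matrix_vector_assoc[symmetric] del: transpose_matrix_vector)
  hence "(((A - k *\<^sub>R (B ** transpose B ** matrix_inv W)) ** W) *v z) \<bullet> z
      = (A *v (W *v z)) \<bullet> z - k * (?u \<bullet> ?u)"
    by (simp add: inner_diff_left inner_matrix_vector_transpose[of B] del: transpose_matrix_vector)
  moreover have "?u \<bullet> ?u \<le> k * (?u \<bullet> ?u)"
    using mult_right_mono[OF gain inner_ge_zero[of ?u]] by simp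
  ultimately show ?thesis using gramian_lyapunov_inequality[OF ts, of A B \<alpha> z] unfolding W_def by linarith
qed

lemma mexp_closed_loop_decay:
  fixes A :: "real^'n^'n" and B :: "real^'m^'n"
  assumes ts: "ts \<ge> 0" and lmin: "lmin > 0"
    and lower: "\<And>z. lmin * (z \<bullet> z) \<le> (gramian A B 0 ts *v z) \<bullet> z"
    and upper: "\<And>z. (gramian A B 0 ts *v z) \<bullet> z \<le> lmax * (z \<bullet> z)"
    and \<alpha>: "\<alpha> \<ge> 0" and K: "K = \<mu> *\<^sub>R (transpose B ** matrix_inv (gramian A B \<alpha> ts))"
    and gain: "1 \<le> l * \<mu>" and t: "t \<ge> 0"
  shows "norm (mexp (t *\<^sub>R (A - l *\<^sub>R (B ** K))) *v x)
    \<le> sqrt (lmax / lmin) * exp (\<alpha> * ts / 2) * exp (- \<alpha> * t) * norm x"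
proof -
  let ?W = "gramian A B \<alpha> ts" and ?c = "exp (- \<alpha> * ts) * lmin"
  have W_lower: "?c * (z \<bullet> z) \<le> (?W *v z) \<bullet> z" for z
  proof -
    have "exp (- \<alpha> * ts) * (lmin * (z \<bullet> z)) \<le> exp (- \<alpha> * ts) * ((gramian A B 0 ts *v z) \<bullet> z)"
      by (rule mult_left_mono[OF lower]) simp
    also have "\<dots> \<le> (?W *v z) \<bullet> z" by (rule gramian_quadratic_form_bounds(1)[OF \<alpha>])
    finally show ?thesis by (simp add: mult.assoc)
  qed
  have W_upper: "(?W *v z) \<bullet> z \<le> lmax * (z \<bullet> z)" for z
    using gramian_quadratic_form_bounds(2)[OF \<alpha>, of A B ts z] upper[of z] by linarith
  have c: "?c > 0" using lmin by simp
  have "A - l *\<^sub>R (B ** K) = A - (l * \<mu>) *\<^sub>R (B ** transpose B ** matrix_inv ?W)"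
    by (simp add: K matrix_scalar_ac scalar_matrix_assoc[symmetric] matrix_mul_assoc)
  with mexp_decay_of_lyapunov[OF gramian_symmetric c W_lower W_upper
      gramian_closed_loop_dissipative[OF ts positive_definite_matrix_inv(2)[OF c W_lower] gain] t]
  have "norm (mexp (t *\<^sub>R (A - l *\<^sub>R (B ** K))) *v x) \<le> sqrt (lmax / ?c) * exp (- \<alpha> * t) * norm x"
    by simp
  moreover have "sqrt (lmax / ?c) = sqrt (lmax / lmin) * exp (\<alpha> * ts / 2)"
  proof -
    have "lmax / ?c = lmax / lmin * exp (\<alpha> * ts / 2) ^ 2"
      by (simp add: exp_minus field_simps power2_eq_square flip: exp_add)
    thus ?thesis by (simp only: real_sqrt_mult real_sqrt_abs) simp
  qed
  ultimately show ?thesis by simp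
qed

lemma onorm_Phi_le:
  fixes xi :: "nat \<Rightarrow> real^'N::finite"
  assumes "\<And>k k'. k < CARD('N) \<Longrightarrow> k' < CARD('N) \<Longrightarrow> xi k \<bullet> xi k' = (if k = k' then 1 else 0)"
    and "\<And>k y. k \<in> {nj..<CARD('N)} \<Longrightarrow> norm (mexp (t *\<^sub>R (A - lam k *\<^sub>R (B ** K))) *v y) \<le> L * norm y"
    and "L \<ge> 0"
  shows "onorm (\<lambda>x. Phi A B K nj lam xi t *v x) \<le> L"
proof (rule onorm_bound[OF assms(3)])
  show "norm (Phi A B K nj lam xi t *v x) \<le> L * norm x" for x
    unfolding Phi_def by (rule norm_orthonormal_block_matrix_le) (use assms in auto)
qed

theorem lemma5:
  fixes A :: "real^'n^'n" and B :: "real^'m^'n"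
    and adj :: "nat \<Rightarrow> 'N::finite \<Rightarrow> 'N \<Rightarrow> bool" and pin :: "nat \<Rightarrow> 'N \<Rightarrow> bool"
    and n0 :: nat and \<sigma> :: "real \<Rightarrow> nat" and tsw :: "nat \<Rightarrow> real" and \<tau> :: real
    and nn :: "nat \<Rightarrow> nat" and lam :: "nat \<Rightarrow> nat \<Rightarrow> real" and xi :: "nat \<Rightarrow> nat \<Rightarrow> real^'N"
    and \<alpha> tstar \<mu> lamM lamm :: real and K :: "real^'n^'m"
  assumes ctrb: "controllable A B"
    and sig_range: "\<And>t. t \<ge> 0 \<Longrightarrow> \<sigma> t \<in> {1..n0}"
    and ts0: "tsw 0 = 0" and tau_pos: "\<tau> > 0"
    and dwell: "\<And>j. tsw (Suc j) - tsw j \<ge> \<tau>"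
    and sig_const: "\<And>j t. tsw j \<le> t \<Longrightarrow> t < tsw (Suc j) \<Longrightarrow> \<sigma> t = \<sigma> (tsw j)"
    and no_loops: "\<And>p i. p \<in> {1..n0} \<Longrightarrow> \<not> adj p i i"
    and undirected: "\<And>t i k. t \<ge> 0 \<Longrightarrow> adj (\<sigma> t) i k = adj (\<sigma> t) k i"
    and nullity: "\<And>j. nn j = dim {x. Hmat adj pin (\<sigma> (tsw j)) *v x = 0}"
    and orthonormal: "\<And>j k k'. k < CARD('N) \<Longrightarrow> k' < CARD('N) \<Longrightarrow>
          xi j k \<bullet> xi j k' = (if k = k' then 1 else 0)"
    and eigvec: "\<And>j k. k < CARD('N) \<Longrightarrow>
          Hmat adj pin (\<sigma> (tsw j)) *v xi j k = lam j k *\<^sub>R xi j k"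
    and eig_zero: "\<And>j k. k < nn j \<Longrightarrow> lam j k = 0"
    and eig_pos: "\<And>j k. nn j \<le> k \<Longrightarrow> k < CARD('N) \<Longrightarrow> lam j k > 0"
    and eig_sorted: "\<And>j k k'. k \<le> k' \<Longrightarrow> k' < CARD('N) \<Longrightarrow> lam j k \<le> lam j k'"
    and alpha_pos: "\<alpha> > 0" and tstar_pos: "tstar > 0"
    and mu: "\<mu> \<ge> 1 / lambda_H CARD('N)"
    and K_def: "K = \<mu> *\<^sub>R (transpose B ** matrix_inv (gramian A B \<alpha> tstar))"
    and lM: "is_eigenvalue (gramian A B 0 tstar) lamM"
    and lM_max: "\<And>l. is_eigenvalue (gramian A B 0 tstar) l \<Longrightarrow> l \<le> lamM"
    and lm: "is_eigenvalue (gramian A B 0 tstar) lamm"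
    and lm_min: "\<And>l. is_eigenvalue (gramian A B 0 tstar) l \<Longrightarrow> lamm \<le> l"
  shows "sqrt (lamM / lamm) * exp (\<alpha> * tstar / 2) \<ge> 1 \<and>
    (\<forall>j t. 0 \<le> t \<and> t \<le> tsw (Suc j) - tsw j \<longrightarrow>
       onorm (\<lambda>x. Phi A B K (nn j) (lam j) (xi j) t *v x)
         \<le> sqrt (lamM / lamm) * exp (\<alpha> * tstar / 2) * exp (- \<alpha> * t))"
proof -
  let ?C0 = "sqrt (lamM / lamm) * exp (\<alpha> * tstar / 2)"
  have lamm: "lamm > 0" by (rule gramian_eigenvalue_pos[OF ctrb tstar_pos lm])
  have C0: "1 \<le> ?C0"
    using lm_min[OF lM] lamm alpha_pos tstar_pos by (intro mult_ge1_I) auto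
  have gain: "1 \<le> lam j k * \<mu>" if k: "k \<in> {nn j..<CARD('N)}" for j k
  proof -
    have "tsw j \<ge> 0"
    proof (induction j)
      case (Suc j)
      thus ?case using dwell[of j] tau_pos by linarith
    qed (simp add: ts0)
    moreover have "xi j k \<noteq> 0" using orthonormal[of k k j] k by auto
    ultimately have "lambda_H CARD('N) \<le> lam j k"
      using Hmat_eigenvalue_ge_lambda_H[OF no_loops undirected eigvec] sig_range eig_pos k by auto
    thus ?thesis using mu by (rule one_le_mult_of_lambda_H_le) (simp add: Suc_le_eq)
  qed
  show ?thesis
  proof (intro conjI allI impI)
    fix j t assume t: "0 \<le> t \<and> t \<le> tsw (Suc j) - tsw j"
    show "onorm (\<lambda>x. Phi A B K (nn j) (lam j) (xi j) t *v x) \<le> ?C0 * exp (- \<alpha> * t)"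
    proof (rule onorm_Phi_le)
      fix k y assume "k \<in> {nn j..<CARD('N)}"
      with t show "norm (mexp (t *\<^sub>R (A - lam j k *\<^sub>R (B ** K))) *v y) \<le> ?C0 * exp (- \<alpha> * t) * norm y"
        by (intro mexp_closed_loop_decay[OF _ lamm
            least_eigenvalue_le_quadratic_form[OF gramian_symmetric lm_min]
            quadratic_form_le_greatest_eigenvalue[OF gramian_symmetric lM_max] _ K_def gain])
          (use alpha_pos tstar_pos in auto)
    qed (use orthonormal C0 in \<open>auto intro!: mult_nonneg_nonneg\<close>)
  qed (rule C0)
qed

end
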